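(* Let $G\in\mathcal{C}$, let $H$ be a hole of $G$ of length greater than six, and let $u,v\in V(G)\setminus V(H)$ be non-adjacent vertices that cross with respect to $H$. Then $H$ contains an edge $xy$ such that both $x$ and $y$ are adjacent to both $u$ and $v$.
   Context: All graphs are finite and simple; paths are induced paths; a hole is an induced cycle of length at least four. $\mathcal{C}$ is the class of graphs containing no theta, pyramid, prism or turtle as an induced subgraph, where: a theta consists of two nonadjacent vertices $a,b$ and three paths from $a$ to $b$, otherwise vertex-disjoint, any two of which induce a hole; a pyramid consists of a vertex $a$, a triangle $\{b_1,b_2,b_3\}$ and paths $P_i$ from $a$ to $b_i$, pairwise disjoint except at $a$, any two of which induce a hole; a prism consists of two disjoint triangles $\{a_1,a_2,a_3\},\{b_1,b_2,b_3\}$ and pairwise disjoint paths $P_i$ from $a_i$ to $b_i$, any two of which induce a hole; a turtle consists of disjoint paths $P_1$ (from $a_1$ to $b_1$), $P_2$ (from $a_2$ to $b_2$) with $a_1a_2,b_1b_2$ edges and $V(P_1)\cup V(P_2)$ inducing a hole, plus adjacent vertices $x,y$ where $x$ has at least three neighbors in $P_1$ and none in $P_2$, and $y$ has at least three neighbors in $P_2$ and none in $P_1$. Two vertices $u,v\notin V(H)$ are nested with respect to $H$ if there exist distinct $a,b\in V(H)$ such that one of the two $a$–$b$ paths of $H$ contains all neighbors of $u$ in $H$ and the other contains all neighbors of $v$ in $H$; they cross if they are not nested. *)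

theory Defs
  imports Main
begin

definition graph :: "'a set \<Rightarrow> ('a \<Rightarrow> 'a \<Rightarrow> bool) \<Rightarrow> bool" where
  "graph V E \<longleftrightarrow> finite V \<and> (\<forall>x y. E x y \<longrightarrow> x \<in> V \<and> y \<in> V)
     \<and> (\<forall>x y. E x y \<longrightarrow> E y x) \<and> (\<forall>x. \<not> E x x)"

definition is_path :: "'a set \<Rightarrow> ('a \<Rightarrow> 'a \<Rightarrow> bool) \<Rightarrow> 'a list \<Rightarrow> bool" where
  "is_path V E p \<longleftrightarrow> p \<noteq> [] \<and> distinct p \<and> set p \<subseteq> V \<and>
     (\<forall>i j. i < length p \<and> j < length p \<longrightarrow> (E (p!i) (p!j) \<longleftrightarrow> (i = j + 1 \<or> j = i + 1)))"

definition path_from_to :: "'a set \<Rightarrow> ('a \<Rightarrow> 'a \<Rightarrow> bool) \<Rightarrow> 'a list \<Rightarrow> 'a \<Rightarrow> 'a \<Rightarrow> bool" where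
  "path_from_to V E p a b \<longleftrightarrow> is_path V E p \<and> hd p = a \<and> last p = b"

definition is_hole :: "'a set \<Rightarrow> ('a \<Rightarrow> 'a \<Rightarrow> bool) \<Rightarrow> 'a list \<Rightarrow> bool" where
  "is_hole V E c \<longleftrightarrow> length c \<ge> 4 \<and> distinct c \<and> set c \<subseteq> V \<and>
     (\<forall>i j. i < length c \<and> j < length c \<longrightarrow>
        (E (c!i) (c!j) \<longleftrightarrow> (j = (i + 1) mod length c \<or> i = (j + 1) mod length c)))"

definition induces_hole :: "'a set \<Rightarrow> ('a \<Rightarrow> 'a \<Rightarrow> bool) \<Rightarrow> 'a set \<Rightarrow> bool" where
  "induces_hole V E S \<longleftrightarrow> (\<exists>c. is_hole V E c \<and> set c = S)"

definition has_theta :: "'a set \<Rightarrow> ('a \<Rightarrow> 'a \<Rightarrow> bool) \<Rightarrow> bool" where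
  "has_theta V E \<longleftrightarrow> (\<exists>a b P1 P2 P3. a \<noteq> b \<and> \<not> E a b \<and>
     path_from_to V E P1 a b \<and> path_from_to V E P2 a b \<and> path_from_to V E P3 a b \<and>
     set P1 \<inter> set P2 = {a, b} \<and> set P1 \<inter> set P3 = {a, b} \<and> set P2 \<inter> set P3 = {a, b} \<and>
     induces_hole V E (set P1 \<union> set P2) \<and> induces_hole V E (set P1 \<union> set P3) \<and>
     induces_hole V E (set P2 \<union> set P3))"

definition has_pyramid :: "'a set \<Rightarrow> ('a \<Rightarrow> 'a \<Rightarrow> bool) \<Rightarrow> bool" where
  "has_pyramid V E \<longleftrightarrow> (\<exists>a b1 b2 b3 P1 P2 P3.
     E b1 b2 \<and> E b1 b3 \<and> E b2 b3 \<and>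
     path_from_to V E P1 a b1 \<and> path_from_to V E P2 a b2 \<and> path_from_to V E P3 a b3 \<and>
     set P1 \<inter> set P2 = {a} \<and> set P1 \<inter> set P3 = {a} \<and> set P2 \<inter> set P3 = {a} \<and>
     induces_hole V E (set P1 \<union> set P2) \<and> induces_hole V E (set P1 \<union> set P3) \<and>
     induces_hole V E (set P2 \<union> set P3))"

definition has_prism :: "'a set \<Rightarrow> ('a \<Rightarrow> 'a \<Rightarrow> bool) \<Rightarrow> bool" where
  "has_prism V E \<longleftrightarrow> (\<exists>a1 a2 a3 b1 b2 b3 P1 P2 P3.
     E a1 a2 \<and> E a1 a3 \<and> E a2 a3 \<and> E b1 b2 \<and> E b1 b3 \<and> E b2 b3 \<and>
     {a1, a2, a3} \<inter> {b1, b2, b3} = {} \<and>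
     path_from_to V E P1 a1 b1 \<and> path_from_to V E P2 a2 b2 \<and> path_from_to V E P3 a3 b3 \<and>
     set P1 \<inter> set P2 = {} \<and> set P1 \<inter> set P3 = {} \<and> set P2 \<inter> set P3 = {} \<and>
     induces_hole V E (set P1 \<union> set P2) \<and> induces_hole V E (set P1 \<union> set P3) \<and>
     induces_hole V E (set P2 \<union> set P3))"

definition has_turtle :: "'a set \<Rightarrow> ('a \<Rightarrow> 'a \<Rightarrow> bool) \<Rightarrow> bool" where
  "has_turtle V E \<longleftrightarrow> (\<exists>a1 b1 a2 b2 P1 P2 x y.
     path_from_to V E P1 a1 b1 \<and> path_from_to V E P2 a2 b2 \<and>
     set P1 \<inter> set P2 = {} \<and> E a1 a2 \<and> E b1 b2 \<and>
     induces_hole V E (set P1 \<union> set P2) \<and>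
     x \<in> V \<and> y \<in> V \<and> x \<notin> set P1 \<union> set P2 \<and> y \<notin> set P1 \<union> set P2 \<and> E x y \<and>
     card {z \<in> set P1. E x z} \<ge> 3 \<and> (\<forall>z \<in> set P2. \<not> E x z) \<and>
     card {z \<in> set P2. E y z} \<ge> 3 \<and> (\<forall>z \<in> set P1. \<not> E y z))"

definition in_C :: "'a set \<Rightarrow> ('a \<Rightarrow> 'a \<Rightarrow> bool) \<Rightarrow> bool" where
  "in_C V E \<longleftrightarrow> graph V E \<and> \<not> has_theta V E \<and> \<not> has_pyramid V E \<and>
     \<not> has_prism V E \<and> \<not> has_turtle V E"

definition arc :: "'a list \<Rightarrow> nat \<Rightarrow> nat \<Rightarrow> 'a set" where
  "arc c i j = {c ! ((i + k) mod length c) | k. k \<le> (j + length c - i) mod length c}"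

text \<open>u, v nested w.r.t. hole c: there are distinct vertices a = c!i, b = c!j of the hole
such that one of the two a-b paths of the hole contains all hole-neighbours of u and the
other contains all hole-neighbours of v.\<close>
definition nested :: "('a \<Rightarrow> 'a \<Rightarrow> bool) \<Rightarrow> 'a list \<Rightarrow> 'a \<Rightarrow> 'a \<Rightarrow> bool" where
  "nested E c u v \<longleftrightarrow> u \<notin> set c \<and> v \<notin> set c \<and>
     (\<exists>i j. i < length c \<and> j < length c \<and> i \<noteq> j \<and>
        ((({z \<in> set c. E u z} \<subseteq> arc c i j \<and> {z \<in> set c. E v z} \<subseteq> arc c j i)) \<or>
         (({z \<in> set c. E v z} \<subseteq> arc c i j \<and> {z \<in> set c. E u z} \<subseteq> arc c j i))))"

definition cross :: "('a \<Rightarrow> 'a \<Rightarrow> bool) \<Rightarrow> 'a list \<Rightarrow> 'a \<Rightarrow> 'a \<Rightarrow> bool" where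
  "cross E c u v \<longleftrightarrow> u \<notin> set c \<and> v \<notin> set c \<and> \<not> nested E c u v"

end

theory Submission
  imports Defs
begin

text \<open>Suppose no edge of the hole is complete to \<open>{u, v}\<close>. A sector of a vertex outside the hole
  is the stretch of the hole between two consecutive neighbours of it. If one of \<open>u, v\<close> has at
  most one neighbour on the hole, or all neighbours of one lie in a single sector of the other,
  the two are nested. Otherwise some sector of \<open>u\<close> has a private neighbour of \<open>v\<close> in its interior
  and \<open>v\<close> has a further neighbour outside it. Either the sectors of \<open>u\<close> and \<open>v\<close> then interleave,
  or both ends of the sector are common neighbours, and the sector of \<open>u\<close> around the further
  neighbour of \<open>v\<close> yields interleaving sectors or a third common neighbour. Interleaving sectors
  are ruled out by an exhaustive analysis of the neighbours of \<open>u\<close> and \<open>v\<close> near the sector ends: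
  each case exhibits a theta, pyramid, prism or turtle made of \<open>u\<close>, \<open>v\<close> and stretches of the
  hole. Three common neighbours, or a vertex with exactly two non-adjacent neighbours on the
  hole, give a theta directly.\<close>

section \<open>Induced paths and holes\<close>

lemma graphD:
  assumes "graph V E"
  shows "finite V" "E a b \<Longrightarrow> a \<in> V" "E a b \<Longrightarrow> b \<in> V" "E a b \<Longrightarrow> E b a" "\<not> E a a"
  using assms unfolding graph_def by blast+

lemma is_path_adj_iff:
  assumes "is_path V E p" "i < length p" "j < length p"
  shows "E (p!i) (p!j) \<longleftrightarrow> (i = j + 1 \<or> j = i + 1)"
  using assms unfolding is_path_def by blast

lemma is_path_singleton: "w \<in> V \<Longrightarrow> graph V E \<Longrightarrow> is_path V E [w]"
  unfolding is_path_def using graphD(5) by fastforce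

lemma is_path_nth_inj:
  assumes "is_path V E p" "i < length p" "j < length p" "p!i = p!j"
  shows "i = j"
  using assms unfolding is_path_def by (simp add: nth_eq_iff_index_eq)

lemma is_path_append:
  assumes g: "graph V E" and p: "is_path V E p" and q: "is_path V E q"
    and dj: "set p \<inter> set q = {}"
    and e: "E (last p) (hd q)"
    and cr: "\<And>a b. a \<in> set p \<Longrightarrow> b \<in> set q \<Longrightarrow> E a b \<Longrightarrow> a = last p \<and> b = hd q"
  shows "is_path V E (p @ q)"
proof -
  have pne: "p \<noteq> []" and qne: "q \<noteq> []" using p q unfolding is_path_def by auto
  let ?lp = "length p" and ?lq = "length q"
  have lastp: "last p = p ! (?lp - 1)" using pne by (simp add: last_conv_nth)
  have hdq: "hd q = q ! 0" using qne by (simp add: hd_conv_nth)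
  have cr2: "E (p!i) (q!k) \<longleftrightarrow> (i = ?lp - 1 \<and> k = 0)" if "i < ?lp" "k < ?lq" for i k
  proof
    assume "E (p!i) (q!k)"
    then have "p!i = last p \<and> q!k = hd q" using cr[of "p!i" "q!k"] that nth_mem by blast
    then show "i = ?lp - 1 \<and> k = 0"
      using is_path_nth_inj[OF p, of i "?lp - 1"] is_path_nth_inj[OF q, of k 0] lastp hdq that pne qne
      by auto
  next
    assume "i = ?lp - 1 \<and> k = 0"
    then show "E (p!i) (q!k)" using e lastp hdq by simp
  qed
  have mixed: "E ((p @ q) ! i) ((p @ q) ! j) = (i = j + 1 \<or> j = i + 1)"
    if ij: "i < ?lp" "?lp \<le> j" "j < ?lp + ?lq" for i j
  proof -
    have "E ((p @ q) ! i) ((p @ q) ! j) = E (p!i) (q!(j - ?lp))" using ij by (simp add: nth_append)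
    also have "\<dots> = (i = ?lp - 1 \<and> j - ?lp = 0)" using cr2[of i "j - ?lp"] ij by auto
    also have "\<dots> = (i = j + 1 \<or> j = i + 1)" using ij by auto
    finally show ?thesis .
  qed
  have E_sym: "E a b = E b a" for a b using graphD(4)[OF g] by blast
  show ?thesis unfolding is_path_def
  proof (intro conjI allI impI)
    show "p @ q \<noteq> []" using pne by simp
    show "distinct (p @ q)" using p q dj unfolding is_path_def by auto
    show "set (p @ q) \<subseteq> V" using p q unfolding is_path_def by auto
  next
    fix i j assume ij: "i < length (p @ q) \<and> j < length (p @ q)"
    show "E ((p @ q) ! i) ((p @ q) ! j) = (i = j + 1 \<or> j = i + 1)"
    proof (cases "i < ?lp")
      case True
      show ?thesis
      proof (cases "j < ?lp")
        case True
        then show ?thesis using \<open>i < ?lp\<close> is_path_adj_iff[OF p] by (simp add: nth_append)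
      next
        case False
        then show ?thesis using mixed[of i j] \<open>i < ?lp\<close> ij by simp
      qed
    next
      case False
      show ?thesis
      proof (cases "j < ?lp")
        case True
        then show ?thesis using mixed[of j i] \<open>\<not> i < ?lp\<close> ij E_sym by auto
      next
        case False
        have "E ((p @ q) ! i) ((p @ q) ! j) = E (q ! (i - ?lp)) (q ! (j - ?lp))"
          using False \<open>\<not> i < ?lp\<close> by (simp add: nth_append)
        also have "\<dots> = (i - ?lp = j - ?lp + 1 \<or> j - ?lp = i - ?lp + 1)"
          using is_path_adj_iff[OF q, of "i - ?lp" "j - ?lp"] ij False \<open>\<not> i < ?lp\<close> by auto
        also have "\<dots> = (i = j + 1 \<or> j = i + 1)" using False \<open>\<not> i < ?lp\<close> by auto
        finally show ?thesis .
      qed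
    qed
  qed
qed

lemma is_path_rev:
  assumes "is_path V E p" shows "is_path V E (rev p)"
  unfolding is_path_def
proof (intro conjI allI impI)
  show "rev p \<noteq> []" "distinct (rev p)" "set (rev p) \<subseteq> V" using assms unfolding is_path_def by auto
next
  fix i j assume ij: "i < length (rev p) \<and> j < length (rev p)"
  have "E (rev p ! i) (rev p ! j) = E (p ! (length p - Suc i)) (p ! (length p - Suc j))"
    using ij by (simp add: rev_nth)
  also have "\<dots> = (length p - Suc i = length p - Suc j + 1 \<or> length p - Suc j = length p - Suc i + 1)"
    using is_path_adj_iff[OF assms, of "length p - Suc i" "length p - Suc j"] ij by auto
  also have "\<dots> = (i = j + 1 \<or> j = i + 1)" using ij by auto
  finally show "E (rev p ! i) (rev p ! j) = (i = j + 1 \<or> j = i + 1)" .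
qed

lemma is_hole_append:
  assumes g: "graph V E" and p: "is_path V E p" and q: "is_path V E q"
    and dj: "set p \<inter> set q = {}"
    and e1: "E (last p) (hd q)" and e2: "E (last q) (hd p)"
    and cr: "\<And>a b. a \<in> set p \<Longrightarrow> b \<in> set q \<Longrightarrow> E a b \<Longrightarrow>
               (a = last p \<and> b = hd q) \<or> (a = hd p \<and> b = last q)"
    and l4: "length p + length q \<ge> 4"
  shows "is_hole V E (p @ q)"
proof -
  have pne: "p \<noteq> []" and qne: "q \<noteq> []" using p q unfolding is_path_def by auto
  let ?lp = "length p" and ?lq = "length q"
  let ?m = "?lp + ?lq"
  have lastp: "last p = p ! (?lp - 1)" using pne by (simp add: last_conv_nth)
  have hdq: "hd q = q ! 0" using qne by (simp add: hd_conv_nth)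
  have lastq: "last q = q ! (?lq - 1)" using qne by (simp add: last_conv_nth)
  have hdp: "hd p = p ! 0" using pne by (simp add: hd_conv_nth)
  have cr2: "E (p!i) (q!k) \<longleftrightarrow> ((i = ?lp - 1 \<and> k = 0) \<or> (i = 0 \<and> k = ?lq - 1))"
    if "i < ?lp" "k < ?lq" for i k
  proof
    assume "E (p!i) (q!k)"
    then have "(p!i = last p \<and> q!k = hd q) \<or> (p!i = hd p \<and> q!k = last q)" using cr[of "p!i" "q!k"] that nth_mem by blast
    then show "(i = ?lp - 1 \<and> k = 0) \<or> (i = 0 \<and> k = ?lq - 1)"
      using is_path_nth_inj[OF p, of i "?lp - 1"] is_path_nth_inj[OF q, of k 0]
        is_path_nth_inj[OF p, of i 0] is_path_nth_inj[OF q, of k "?lq - 1"]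
        lastp hdq hdp lastq that pne qne
      by auto
  next
    assume "(i = ?lp - 1 \<and> k = 0) \<or> (i = 0 \<and> k = ?lq - 1)"
    then show "E (p!i) (q!k)" using e1 e2 lastp hdq hdp lastq graphD(4)[OF g] by auto
  qed
  have lq1: "?lq \<ge> 1" "?lp \<ge> 1" using pne qne by (auto simp: Suc_le_eq)
  have E_sym: "E a b = E b a" for a b using graphD(4)[OF g] by blast
  have mixed: "E ((p @ q) ! i) ((p @ q) ! j) = (j = (i + 1) mod ?m \<or> i = (j + 1) mod ?m)"
    if ij: "i < ?lp" "?lp \<le> j" "j < ?m" for i j
  proof -
    have a: "(i + 1) mod ?m = i + 1" using ij lq1 by auto
    have b: "(j + 1) mod ?m = (if j + 1 = ?m then 0 else j + 1)" using ij by auto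
    have "E ((p @ q) ! i) ((p @ q) ! j) = E (p!i) (q!(j - ?lp))" using ij by (simp add: nth_append)
    also have "\<dots> = ((i = ?lp - 1 \<and> j - ?lp = 0) \<or> (i = 0 \<and> j - ?lp = ?lq - 1))"
      using cr2[of i "j - ?lp"] ij by auto
    also have "\<dots> = (j = (i + 1) mod ?m \<or> i = (j + 1) mod ?m)"
      unfolding a b using ij l4 by auto
    finally show ?thesis .
  qed
  show ?thesis unfolding is_hole_def
  proof (intro conjI allI impI)
    show "4 \<le> length (p @ q)" using l4 by simp
    show "distinct (p @ q)" using p q dj unfolding is_path_def by auto
    show "set (p @ q) \<subseteq> V" using p q unfolding is_path_def by auto
  next
    fix i j assume ij: "i < length (p @ q) \<and> j < length (p @ q)"
    show "E ((p @ q) ! i) ((p @ q) ! j) =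
          (j = (i + 1) mod length (p @ q) \<or> i = (j + 1) mod length (p @ q))"
    proof (cases "i < ?lp")
      case True
      show ?thesis
      proof (cases "j < ?lp")
        case True
        have "(i + 1) mod ?m = i + 1" "(j + 1) mod ?m = j + 1" using \<open>i < ?lp\<close> True lq1 by auto
        then show ?thesis using \<open>i < ?lp\<close> True is_path_adj_iff[OF p] by (auto simp: nth_append)
      next
        case False
        then show ?thesis using mixed[of i j] \<open>i < ?lp\<close> ij by simp
      qed
    next
      case False
      show ?thesis
      proof (cases "j < ?lp")
        case True
        then show ?thesis using mixed[of j i] \<open>\<not> i < ?lp\<close> ij E_sym by auto
      next
        case False
        have a: "(j + 1) mod ?m = (if j + 1 = ?m then 0 else j + 1)" using ij by auto
        have b: "(i + 1) mod ?m = (if i + 1 = ?m then 0 else i + 1)" using ij by auto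
        have "E ((p @ q) ! i) ((p @ q) ! j) = E (q ! (i - ?lp)) (q ! (j - ?lp))"
          using False \<open>\<not> i < ?lp\<close> by (simp add: nth_append)
        also have "\<dots> = (i - ?lp = j - ?lp + 1 \<or> j - ?lp = i - ?lp + 1)"
          using is_path_adj_iff[OF q, of "i - ?lp" "j - ?lp"] ij False \<open>\<not> i < ?lp\<close> by auto
        also have "\<dots> = (j = (i + 1) mod ?m \<or> i = (j + 1) mod ?m)"
          unfolding a b using ij False \<open>\<not> i < ?lp\<close> lq1 by auto
        finally show ?thesis by simp
      qed
    qed
  qed
qed

lemma is_path_snoc:
  assumes g: "graph V E" and p: "is_path V E p" and w: "w \<in> V" "w \<notin> set p" and e: "E (last p) w"
    and c: "\<forall>z\<in>set p. E z w \<longrightarrow> z = last p"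
  shows "is_path V E (p @ [w])"
  by (rule is_path_append[OF g p is_path_singleton[OF w(1) g]]) (use w e c in auto)

lemma is_path_Cons:
  assumes g: "graph V E" and p: "is_path V E p" and w: "w \<in> V" "w \<notin> set p" and e: "E w (hd p)"
    and c: "\<forall>z\<in>set p. E w z \<longrightarrow> z = hd p"
  shows "is_path V E (w # p)"
  using is_path_append[OF g is_path_singleton[OF w(1) g] p] w e c by auto

lemma card_ge_3E:
  assumes "finite S" "3 \<le> card S"
  obtains a b c where "a \<in> S" "b \<in> S" "c \<in> S" "a \<noteq> b" "a \<noteq> c" "b \<noteq> c"
proof -
  obtain a where a: "a \<in> S" using assms by fastforce
  have "2 \<le> card (S - {a})" using assms a by simp
  then have "S - {a} \<noteq> {}" by (metis card.empty not_numeral_le_zero)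
  then obtain b where b: "b \<in> S - {a}" by blast
  have "1 \<le> card (S - {a} - {b})" using assms a b by (simp add: card_Diff_singleton)
  then have "S - {a} - {b} \<noteq> {}" by (metis card.empty not_one_le_zero)
  then obtain c where c: "c \<in> S - {a} - {b}" by blast
  show ?thesis using that a b c by blast
qed

lemma obtain_least_above:
  fixes a k0 :: nat
  assumes "a < k0" "P k0"
  obtains k where "a < k" "k \<le> k0" "P k" "\<And>j. a < j \<Longrightarrow> j < k \<Longrightarrow> \<not> P j"
proof
  define k where "k = (LEAST k. a < k \<and> P k)"
  show "a < k" "P k" using LeastI[of "\<lambda>k. a < k \<and> P k" k0] assms unfolding k_def by auto
  show "k \<le> k0" unfolding k_def using assms by (intro Least_le) auto
  show "\<not> P j" if "a < j" "j < k" for j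
    using not_less_Least[of j "\<lambda>k. a < k \<and> P k"] that unfolding k_def by auto
qed

lemma obtain_greatest_below:
  fixes b k0 :: nat
  assumes "k0 < b" "P k0"
  obtains k where "k0 \<le> k" "k < b" "P k" "\<And>j. k < j \<Longrightarrow> j < b \<Longrightarrow> \<not> P j"
proof
  define k where "k = (GREATEST k. k < b \<and> P k)"
  have bnd: "\<And>j. j < b \<and> P j \<Longrightarrow> j \<le> b" by simp
  show "k < b" "P k" using GreatestI_nat[of "\<lambda>k. k < b \<and> P k" k0 b] assms bnd unfolding k_def by auto
  show "k0 \<le> k" unfolding k_def using assms by (intro Greatest_le_nat[of _ k0 b]) auto
  show "\<not> P j" if "k < j" "j < b" for j
  proof
    assume "P j"
    then have "j \<le> k" unfolding k_def using that by (intro Greatest_le_nat[of _ j b]) auto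
    then show False using that by simp
  qed
qed

lemma mod_eq_iff_within_two_periods:
  fixes c d n :: nat
  assumes "d \<le> c" "c < d + 2 * n"
  shows "(c mod n = d mod n) \<longleftrightarrow> (c = d \<or> c = d + n)"
proof
  assume "c mod n = d mod n"
  then have "n dvd (c - d)" using assms(1) by (simp add: mod_eq_dvd_iff_nat)
  then obtain k where k: "c - d = n * k" by blast
  have n_pos: "n > 0" using assms by (cases n) auto
  have "n * k < n * 2" using k assms by linarith
  then have "k < 2" using n_pos by simp
  then have "k = 0 \<or> k = 1" by auto
  then show "c = d \<or> c = d + n" using k assms(1) by auto
next
  assume "c = d \<or> c = d + n"
  then show "c mod n = d mod n" by auto
qed

section \<open>Recognising thetas, pyramids, prisms and turtles\<close>

text \<open>Thetas, pyramids and prisms are assembled from their paths with the end vertices removed;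
  the side conditions say which edges may run between two such paths.\<close>

definition interior_path :: "'a set \<Rightarrow> ('a \<Rightarrow> 'a \<Rightarrow> bool) \<Rightarrow> 'a \<Rightarrow> 'a \<Rightarrow> 'a list \<Rightarrow> bool" where
  "interior_path V E a b I \<longleftrightarrow> is_path V E I \<and> a \<notin> set I \<and> b \<notin> set I \<and> E a (hd I) \<and> E (last I) b \<and>
     (\<forall>z\<in>set I. E a z \<longrightarrow> z = hd I) \<and> (\<forall>z\<in>set I. E z b \<longrightarrow> z = last I)"

definition anticomplete :: "('a \<Rightarrow> 'a \<Rightarrow> bool) \<Rightarrow> 'a list \<Rightarrow> 'a list \<Rightarrow> bool" where
  "anticomplete E I J \<longleftrightarrow> set I \<inter> set J = {} \<and> (\<forall>z\<in>set I. \<forall>w\<in>set J. \<not> E z w)"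

lemma interior_path_is_path:
  assumes g: "graph V E" and aV: "a \<in> V" and bV: "b \<in> V" and ab: "a \<noteq> b" "\<not> E a b"
    and I: "interior_path V E a b I"
  shows "is_path V E ([a] @ I @ [b])"
proof -
  have Ine: "I \<noteq> []" using I unfolding interior_path_def is_path_def by auto
  have "is_path V E (I @ [b])"
    by (rule is_path_append[OF g _ is_path_singleton[OF bV g]]) (use I in \<open>auto simp: interior_path_def\<close>)
  then show ?thesis
    by (rule is_path_append[OF g is_path_singleton[OF aV g]]) (use I ab Ine in \<open>auto simp: interior_path_def\<close>)
qed

lemma interior_paths_hole:
  assumes g: "graph V E" and aV: "a \<in> V" and bV: "b \<in> V" and ab: "a \<noteq> b" "\<not> E a b"
    and I: "interior_path V E a b I" and J: "interior_path V E a b J" and s: "anticomplete E I J"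
  shows "induces_hole V E (set ([a] @ I @ [b]) \<union> set ([a] @ J @ [b]))"
proof -
  have E_sym: "E x y = E y x" for x y using graphD(4)[OF g] by blast
  have PI: "is_path V E ([a] @ I @ [b])"
    by (rule interior_path_is_path[OF g aV bV ab I])
  have PJ: "is_path V E J" using J unfolding interior_path_def by blast
  have Ine: "I \<noteq> []" "J \<noteq> []" using I J unfolding interior_path_def is_path_def by auto
  have h: "is_hole V E (([a] @ I @ [b]) @ rev J)"
  proof (rule is_hole_append[OF g PI is_path_rev[OF PJ]])
    show "set ([a] @ I @ [b]) \<inter> set (rev J) = {}" using I J s unfolding interior_path_def anticomplete_def by auto
    show "E (last ([a] @ I @ [b])) (hd (rev J))" using J Ine E_sym unfolding interior_path_def by (simp add: hd_rev)
    show "E (last (rev J)) (hd ([a] @ I @ [b]))" using J Ine E_sym unfolding interior_path_def by (simp add: last_rev)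
    show "4 \<le> length ([a] @ I @ [b]) + length (rev J)" using Ine by (cases I; cases J; simp)
  next
    fix x y assume xy: "x \<in> set ([a] @ I @ [b])" "y \<in> set (rev J)" "E x y"
    then show "x = last ([a] @ I @ [b]) \<and> y = hd (rev J) \<or> x = hd ([a] @ I @ [b]) \<and> y = last (rev J)"
      using J s Ine E_sym unfolding interior_path_def anticomplete_def by (auto simp: hd_rev last_rev)
  qed
  have "set (([a] @ I @ [b]) @ rev J) = set ([a] @ I @ [b]) \<union> set ([a] @ J @ [b])" by auto
  then show ?thesis using h unfolding induces_hole_def by metis
qed

lemma has_thetaI:
  assumes g: "graph V E" and aV: "a \<in> V" and bV: "b \<in> V" and ab: "a \<noteq> b" "\<not> E a b"
    and I1: "interior_path V E a b I1" and I2: "interior_path V E a b I2" and I3: "interior_path V E a b I3"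
    and s12: "anticomplete E I1 I2" and s13: "anticomplete E I1 I3" and s23: "anticomplete E I2 I3"
  shows "has_theta V E"
proof -
  have P: "path_from_to V E ([a] @ I @ [b]) a b" if "interior_path V E a b I" for I
    using that interior_path_is_path[OF g aV bV ab] unfolding path_from_to_def by auto
  have X: "set ([a] @ I @ [b]) \<inter> set ([a] @ J @ [b]) = {a, b}" if "interior_path V E a b I" "interior_path V E a b J" "anticomplete E I J" for I J
    using that unfolding interior_path_def anticomplete_def by auto
  show ?thesis unfolding has_theta_def
    apply (rule exI[of _ a], rule exI[of _ b], rule exI[of _ "[a] @ I1 @ [b]"], rule exI[of _ "[a] @ I2 @ [b]"],
        rule exI[of _ "[a] @ I3 @ [b]"])
    using ab P[OF I1] P[OF I2] P[OF I3] X[OF I1 I2 s12] X[OF I1 I3 s13] X[OF I2 I3 s23]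
      interior_paths_hole[OF g aV bV ab I1 I2 s12] interior_paths_hole[OF g aV bV ab I1 I3 s13] interior_paths_hole[OF g aV bV ab I2 I3 s23]
    by - (intro conjI; assumption)
qed

definition branch :: "'a set \<Rightarrow> ('a \<Rightarrow> 'a \<Rightarrow> bool) \<Rightarrow> 'a \<Rightarrow> 'a list \<Rightarrow> bool" where
  "branch V E a I \<longleftrightarrow> is_path V E I \<and> a \<notin> set I \<and> E a (hd I) \<and> (\<forall>z\<in>set I. E a z \<longrightarrow> z = hd I)"

definition meet_at_last :: "('a \<Rightarrow> 'a \<Rightarrow> bool) \<Rightarrow> 'a list \<Rightarrow> 'a list \<Rightarrow> bool" where
  "meet_at_last E I J \<longleftrightarrow> set I \<inter> set J = {} \<and> (\<forall>z\<in>set I. \<forall>w\<in>set J. E z w \<longrightarrow> z = last I \<and> w = last J)"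

lemma branches_hole:
  assumes g: "graph V E" and aV: "a \<in> V" and I: "branch V E a I" and J: "branch V E a J" and s: "meet_at_last E I J"
    and t: "E (last I) (last J)" and l: "\<not> (length I = 1 \<and> length J = 1)"
  shows "induces_hole V E (set (a # I) \<union> set (a # J))"
proof -
  have E_sym: "E x y = E y x" for x y using graphD(4)[OF g] by blast
  have Ine: "I \<noteq> []" "J \<noteq> []" using I J unfolding branch_def is_path_def by auto
  have PI: "is_path V E ([a] @ I)"
    by (rule is_path_append[OF g is_path_singleton[OF aV g]]) (use I Ine in \<open>auto simp: branch_def\<close>)
  have PJ: "is_path V E J" using J unfolding branch_def by blast
  have h: "is_hole V E (([a] @ I) @ rev J)"
  proof (rule is_hole_append[OF g PI is_path_rev[OF PJ]])
    show "set ([a] @ I) \<inter> set (rev J) = {}" using I J s unfolding branch_def meet_at_last_def by auto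
    show "E (last ([a] @ I)) (hd (rev J))" using t Ine by (simp add: hd_rev)
    show "E (last (rev J)) (hd ([a] @ I))" using J Ine E_sym unfolding branch_def by (simp add: last_rev)
    have "length I \<ge> 1" "length J \<ge> 1" using Ine by (auto simp: Suc_le_eq)
    then show "4 \<le> length ([a] @ I) + length (rev J)" using l by simp arith
  next
    fix x y assume xy: "x \<in> set ([a] @ I)" "y \<in> set (rev J)" "E x y"
    then show "x = last ([a] @ I) \<and> y = hd (rev J) \<or> x = hd ([a] @ I) \<and> y = last (rev J)"
      using J s Ine E_sym unfolding branch_def meet_at_last_def by (auto simp: hd_rev last_rev)
  qed
  have "set (([a] @ I) @ rev J) = set (a # I) \<union> set (a # J)" by auto
  then show ?thesis using h unfolding induces_hole_def by metis
qed

lemma has_pyramidI: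
  assumes g: "graph V E" and aV: "a \<in> V"
    and I1: "branch V E a I1" and I2: "branch V E a I2" and I3: "branch V E a I3"
    and s12: "meet_at_last E I1 I2" and s13: "meet_at_last E I1 I3" and s23: "meet_at_last E I2 I3"
    and t12: "E (last I1) (last I2)" and t13: "E (last I1) (last I3)" and t23: "E (last I2) (last I3)"
    and l12: "\<not> (length I1 = 1 \<and> length I2 = 1)" and l13: "\<not> (length I1 = 1 \<and> length I3 = 1)"
    and l23: "\<not> (length I2 = 1 \<and> length I3 = 1)"
  shows "has_pyramid V E"
proof -
  have P: "path_from_to V E (a # I) a (last I)" if "branch V E a I" for I
  proof -
    have Ine: "I \<noteq> []" using that unfolding branch_def is_path_def by auto
    have "is_path V E ([a] @ I)"
      by (rule is_path_append[OF g is_path_singleton[OF aV g]]) (use that Ine in \<open>auto simp: branch_def\<close>)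
    then show ?thesis using Ine unfolding path_from_to_def by simp
  qed
  have X: "set (a # I) \<inter> set (a # J) = {a}" if "branch V E a I" "branch V E a J" "meet_at_last E I J" for I J
    using that unfolding branch_def meet_at_last_def by auto
  show ?thesis unfolding has_pyramid_def
    apply (rule exI[of _ a], rule exI[of _ "last I1"], rule exI[of _ "last I2"], rule exI[of _ "last I3"])
    apply (rule exI[of _ "a # I1"], rule exI[of _ "a # I2"], rule exI[of _ "a # I3"])
    using t12 t13 t23 P[OF I1] P[OF I2] P[OF I3] X[OF I1 I2 s12] X[OF I1 I3 s13] X[OF I2 I3 s23]
      branches_hole[OF g aV I1 I2 s12 t12 l12] branches_hole[OF g aV I1 I3 s13 t13 l13] branches_hole[OF g aV I2 I3 s23 t23 l23]
    by - (intro conjI; assumption)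
qed

definition meet_at_ends :: "('a \<Rightarrow> 'a \<Rightarrow> bool) \<Rightarrow> 'a list \<Rightarrow> 'a list \<Rightarrow> bool" where
  "meet_at_ends E I J \<longleftrightarrow> set I \<inter> set J = {} \<and>
     (\<forall>z\<in>set I. \<forall>w\<in>set J. E z w \<longrightarrow> (z = hd I \<and> w = hd J) \<or> (z = last I \<and> w = last J))"

lemma meet_at_ends_hole:
  assumes g: "graph V E" and P: "is_path V E P" and Q: "is_path V E Q" and s: "meet_at_ends E P Q"
    and t1: "E (hd P) (hd Q)" and t2: "E (last P) (last Q)" and l: "length P \<ge> 2" and l': "length Q \<ge> 2"
  shows "induces_hole V E (set P \<union> set Q)"
proof -
  have E_sym: "E x y = E y x" for x y using graphD(4)[OF g] by blast
  have Ne: "P \<noteq> []" "Q \<noteq> []" using P Q unfolding is_path_def by auto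
  have h: "is_hole V E (P @ rev Q)"
  proof (rule is_hole_append[OF g P is_path_rev[OF Q]])
    show "set P \<inter> set (rev Q) = {}" using s unfolding meet_at_ends_def by auto
    show "E (last P) (hd (rev Q))" using t2 Ne by (simp add: hd_rev)
    show "E (last (rev Q)) (hd P)" using t1 Ne E_sym by (simp add: last_rev)
    show "4 \<le> length P + length (rev Q)" using l l' by simp
  next
    fix x y assume xy: "x \<in> set P" "y \<in> set (rev Q)" "E x y"
    then show "x = last P \<and> y = hd (rev Q) \<or> x = hd P \<and> y = last (rev Q)"
      using s Ne E_sym unfolding meet_at_ends_def by (auto simp: hd_rev last_rev)
  qed
  then show ?thesis unfolding induces_hole_def by (metis set_append set_rev)
qed

lemma is_path_hd_neq_last:
  assumes "is_path V E P" "length P \<ge> 2" shows "hd P \<noteq> last P"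
proof -
  have "P ! 0 \<noteq> P ! (length P - 1)" using assms unfolding is_path_def
    by (simp add: nth_eq_iff_index_eq)
  moreover have "P \<noteq> []" using assms(2) by auto
  ultimately show ?thesis by (simp add: hd_conv_nth last_conv_nth)
qed

lemma has_prismI:
  assumes g: "graph V E" and P1: "is_path V E P1" and P2: "is_path V E P2" and P3: "is_path V E P3"
    and s12: "meet_at_ends E P1 P2" and s13: "meet_at_ends E P1 P3" and s23: "meet_at_ends E P2 P3"
    and a12: "E (hd P1) (hd P2)" and a13: "E (hd P1) (hd P3)" and a23: "E (hd P2) (hd P3)"
    and b12: "E (last P1) (last P2)" and b13: "E (last P1) (last P3)" and b23: "E (last P2) (last P3)"
    and l1: "length P1 \<ge> 2" and l2: "length P2 \<ge> 2" and l3: "length P3 \<ge> 2"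
  shows "has_prism V E"
proof -
  have Ne: "P1 \<noteq> []" "P2 \<noteq> []" "P3 \<noteq> []" using P1 P2 P3 unfolding is_path_def by auto
  have hl: "hd P1 \<noteq> last P1" "hd P2 \<noteq> last P2" "hd P3 \<noteq> last P3"
    using is_path_hd_neq_last P1 P2 P3 l1 l2 l3 by blast+
  have dj: "set P1 \<inter> set P2 = {}" "set P1 \<inter> set P3 = {}" "set P2 \<inter> set P3 = {}"
    using s12 s13 s23 unfolding meet_at_ends_def by auto
  have m: "hd P1 \<in> set P1" "last P1 \<in> set P1" "hd P2 \<in> set P2" "last P2 \<in> set P2"
    "hd P3 \<in> set P3" "last P3 \<in> set P3" using Ne by auto
  have d: "x \<noteq> y" if "x \<in> set P" "y \<in> set Q" "set P \<inter> set Q = {}" for x y and P Q :: "'a list"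
    using that by blast
  have tri: "{hd P1, hd P2, hd P3} \<inter> {last P1, last P2, last P3} = {}"
    using hl d[OF m(1) m(4) dj(1)] d[OF m(1) m(6) dj(2)] d[OF m(3) m(6) dj(3)]
      d[OF m(2) m(3) dj(1)] d[OF m(2) m(5) dj(2)] d[OF m(4) m(5) dj(3)] by auto
  show ?thesis unfolding has_prism_def
    apply (rule exI[of _ "hd P1"], rule exI[of _ "hd P2"], rule exI[of _ "hd P3"])
    apply (rule exI[of _ "last P1"], rule exI[of _ "last P2"], rule exI[of _ "last P3"])
    apply (rule exI[of _ P1], rule exI[of _ P2], rule exI[of _ P3])
    using a12 a13 a23 b12 b13 b23 tri P1 P2 P3 dj
      meet_at_ends_hole[OF g P1 P2 s12 a12 b12 l1 l2] meet_at_ends_hole[OF g P1 P3 s13 a13 b13 l1 l3]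
      meet_at_ends_hole[OF g P2 P3 s23 a23 b23 l2 l3]
    unfolding path_from_to_def by - (intro conjI; (assumption | rule refl))
qed

lemma card_ge_3I: "finite S \<Longrightarrow> a \<in> S \<Longrightarrow> b \<in> S \<Longrightarrow> c \<in> S \<Longrightarrow> a \<noteq> b \<Longrightarrow> a \<noteq> c \<Longrightarrow> b \<noteq> c \<Longrightarrow> card S \<ge> 3"
proof -
  assume "finite S" "a \<in> S" "b \<in> S" "c \<in> S" "a \<noteq> b" "a \<noteq> c" "b \<noteq> c"
  then have "card {a, b, c} \<le> card S" by (intro card_mono) auto
  then show ?thesis using \<open>a \<noteq> b\<close> \<open>a \<noteq> c\<close> \<open>b \<noteq> c\<close> by simp
qed

lemma has_turtleI:
  assumes g: "graph V E" and P1: "is_path V E P1" and P2: "is_path V E P2"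
    and s: "meet_at_ends E P1 P2" and a: "E (hd P1) (hd P2)" and b: "E (last P1) (last P2)"
    and xV: "x \<in> V" and yV: "y \<in> V" and xn: "x \<notin> set P1 \<union> set P2" and yn: "y \<notin> set P1 \<union> set P2"
    and xy: "E x y"
    and x1: "z1 \<in> set P1" "z2 \<in> set P1" "z3 \<in> set P1" "E x z1" "E x z2" "E x z3" "z1 \<noteq> z2" "z1 \<noteq> z3" "z2 \<noteq> z3"
    and y1: "w1 \<in> set P2" "w2 \<in> set P2" "w3 \<in> set P2" "E y w1" "E y w2" "E y w3" "w1 \<noteq> w2" "w1 \<noteq> w3" "w2 \<noteq> w3"
    and xP2: "\<forall>z\<in>set P2. \<not> E x z" and yP1: "\<forall>z\<in>set P1. \<not> E y z"
  shows "has_turtle V E"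
proof -
  have l: "length P1 \<ge> 2"
  proof -
    have "card (set P1) \<ge> 3" using card_ge_3I[OF _ x1(1-3) x1(7-9)] by simp
    then show ?thesis using card_length[of P1] by linarith
  qed
  have l2: "length P2 \<ge> 2"
  proof -
    have "card (set P2) \<ge> 3" using card_ge_3I[OF _ y1(1-3) y1(7-9)] by simp
    then show ?thesis using card_length[of P2] by linarith
  qed
  have c1: "card {z \<in> set P1. E x z} \<ge> 3" by (rule card_ge_3I[of _ z1 z2 z3]) (use x1 in auto)
  have c2: "card {z \<in> set P2. E y z} \<ge> 3" by (rule card_ge_3I[of _ w1 w2 w3]) (use y1 in auto)
  show ?thesis unfolding has_turtle_def
    apply (rule exI[of _ "hd P1"], rule exI[of _ "last P1"], rule exI[of _ "hd P2"], rule exI[of _ "last P2"])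
    apply (rule exI[of _ P1], rule exI[of _ P2], rule exI[of _ x], rule exI[of _ y])
    using P1 P2 s a b xV yV xn yn xy c1 c2 xP2 yP1 meet_at_ends_hole[OF g P1 P2 s a b l l2]
    unfolding path_from_to_def meet_at_ends_def by - (intro conjI; (assumption | rule refl | blast))
qed

section \<open>Positions on a long hole\<close>

text \<open>Positions on the hole are natural numbers read modulo its length \<open>n\<close>, so any \<open>n\<close>
  consecutive positions enumerate the hole once; the arguments below work inside such a window
  instead of with modular arithmetic.\<close>

locale long_hole =
  fixes V :: "'a set" and E :: "'a \<Rightarrow> 'a \<Rightarrow> bool" and H :: "'a list"
  assumes G: "graph V E" and hole: "is_hole V E H" and len: "length H > 6"
begin

abbreviation "n \<equiv> length H"

definition h :: "nat \<Rightarrow> 'a" where "h i = H ! (i mod n)"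

lemma length_ge_7: "n \<ge> 7" using len by simp

lemma E_sym: "E a b = E b a" using graphD(4)[OF G] by blast

lemma length_pos: "n > 0" using length_ge_7 by linarith

lemma h_in_set: "h i \<in> set H"
  unfolding h_def by (rule nth_mem) (use length_pos in simp)

lemma h_in_V: "h i \<in> V" using h_in_set hole unfolding is_hole_def by blast

lemma h_add_length: "h (i + n) = h i" unfolding h_def by simp

lemma h_eq_iff_mod: "h i = h j \<longleftrightarrow> i mod n = j mod n"
proof -
  have "i mod n < n" "j mod n < n" using length_pos by simp_all
  moreover have "distinct H" using hole unfolding is_hole_def by blast
  ultimately show ?thesis unfolding h_def by (simp add: nth_eq_iff_index_eq)
qed

lemma h_eq_iff:
  assumes "a \<le> i" "i < a + n" "a \<le> j" "j < a + n"
  shows "h i = h j \<longleftrightarrow> i = j"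
proof (cases "j \<le> i")
  case True
  then show ?thesis unfolding h_eq_iff_mod using mod_eq_iff_within_two_periods[of j i n] assms by auto
next
  case False
  then show ?thesis unfolding h_eq_iff_mod using mod_eq_iff_within_two_periods[of i j n] assms by auto
qed

lemma h_adj_iff:
  assumes "a \<le> i" "i < a + n" "a \<le> j" "j < a + n"
  shows "E (h i) (h j) \<longleftrightarrow> (j = i + 1 \<or> i = j + 1 \<or> j = i + (n - 1) \<or> i = j + (n - 1))"
proof -
  have im: "i mod n < n" "j mod n < n" using length_pos by simp_all
  have "E (h i) (h j) \<longleftrightarrow> (j mod n = (i mod n + 1) mod n \<or> i mod n = (j mod n + 1) mod n)"
    using hole im unfolding h_def is_hole_def by blast
  also have "\<dots> \<longleftrightarrow> (j mod n = (i + 1) mod n \<or> i mod n = (j + 1) mod n)"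
    by (simp add: mod_Suc_eq)
  also have "\<dots> \<longleftrightarrow> (j = i + 1 \<or> i = j + 1 \<or> j = i + (n - 1) \<or> i = j + (n - 1))"
  proof -
    have A: "(j mod n = (i + 1) mod n) \<longleftrightarrow> (j = i + 1 \<or> i + 1 = j + n)"
    proof (cases "j \<le> i + 1")
      case True
      then show ?thesis using mod_eq_iff_within_two_periods[of j "i+1" n] assms by auto
    next
      case False
      then show ?thesis using mod_eq_iff_within_two_periods[of "i+1" j n] assms by auto
    qed
    have B: "(i mod n = (j + 1) mod n) \<longleftrightarrow> (i = j + 1 \<or> j + 1 = i + n)"
    proof (cases "i \<le> j + 1")
      case True
      then show ?thesis using mod_eq_iff_within_two_periods[of i "j+1" n] assms by auto
    next
      case False
      then show ?thesis using mod_eq_iff_within_two_periods[of "j+1" i n] assms by auto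
    qed
    show ?thesis unfolding A B using length_ge_7 by auto
  qed
  finally show ?thesis .
qed

lemma set_H_image: "set H = h ` {a..<a+n}"
proof -
  have sub: "h ` {a..<a + n} \<subseteq> set H" using h_in_set by auto
  have "inj_on h {a..<a+n}" using h_eq_iff[of a] by (auto simp: inj_on_def)
  then have c1: "card (h ` {a..<a + n}) = n" by (simp add: card_image)
  have "distinct H" using hole unfolding is_hole_def by blast
  then have c2: "card (set H) = n" by (simp add: distinct_card)
  show ?thesis using card_subset_eq[OF _ sub] c1 c2 by simp
qed

definition seg :: "nat \<Rightarrow> nat \<Rightarrow> 'a list" where "seg a b = map h [a..<Suc b]"

lemma set_seg[simp]: "set (seg a b) = h ` {a..b}"
  unfolding seg_def by auto

lemma hd_seg[simp]: "a \<le> b \<Longrightarrow> hd (seg a b) = h a"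
  unfolding seg_def by (simp add: hd_map upt_conv_Cons del: upt_Suc)

lemma last_seg[simp]: "a \<le> b \<Longrightarrow> last (seg a b) = h b"
  unfolding seg_def by (simp add: last_map)

lemma length_seg[simp]: "length (seg a b) = Suc b - a"
  unfolding seg_def by (simp del: upt_Suc)

lemma seg_path:
  assumes "a \<le> b" "b + 2 \<le> a + n"
  shows "is_path V E (seg a b)"
  unfolding is_path_def
proof (intro conjI allI impI)
  show "seg a b \<noteq> []" using assms unfolding seg_def by simp
  show "set (seg a b) \<subseteq> V" using h_in_V by auto
  show "distinct (seg a b)" unfolding seg_def
  proof (rule distinct_map[THEN iffD2], intro conjI)
    show "inj_on h (set [a..<Suc b])" using h_eq_iff[of a] assms by (auto simp: inj_on_def)
  qed simp
next
  fix i j assume ij: "i < length (seg a b) \<and> j < length (seg a b)"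
  then have "a + i < Suc b" "a + j < Suc b" by auto
  then have "[a..<Suc b] ! i = a + i" "[a..<Suc b] ! j = a + j" by (simp_all del: upt_Suc)
  then have "seg a b ! i = h (a + i)" "seg a b ! j = h (a + j)" unfolding seg_def
    using ij by (simp_all del: upt_Suc)
  moreover have "a + i < a + n" "a + j < a + n" using ij assms by auto
  moreover have "(a+j = a+i+1 \<or> a+i = a+j+1 \<or> a+j = a+i+(n-1) \<or> a+i = a+j+(n-1)) = (i = j + 1 \<or> j = i + 1)"
    using ij assms by auto
  ultimately show "E (seg a b ! i) (seg a b ! j) = (i = j + 1 \<or> j = i + 1)"
    using h_adj_iff[of a "a+i" "a+j"] by simp
qed

lemma rev_seg_path:
  assumes "a \<le> b" "b + 2 \<le> a + n"
  shows "is_path V E (rev (seg a b))"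
  using is_path_rev[OF seg_path[OF assms]] .

lemma h_neq: "w \<notin> set H \<Longrightarrow> h k \<noteq> w" using h_in_set by metis

lemma h_in_image_iff:
  assumes "a \<le> k" "k < a + n" "S \<subseteq> {a..<a+n}"
  shows "h k \<in> h ` S \<longleftrightarrow> k \<in> S"
proof
  assume "h k \<in> h ` S"
  then obtain l where "l \<in> S" "h k = h l" by auto
  then show "k \<in> S" using h_eq_iff[of a k l] assms by auto
qed auto

lemma seg_eq_Nil_iff[simp]: "seg a b = [] \<longleftrightarrow> b < a"
  unfolding seg_def by (simp del: upt_Suc) linarith
lemma hd_rev_seg[simp]: "a \<le> b \<Longrightarrow> hd (rev (seg a b)) = h b" by (simp add: hd_rev)
lemma last_rev_seg[simp]: "a \<le> b \<Longrightarrow> last (rev (seg a b)) = h a" by (simp add: last_rev)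

lemma H_ne_Nil: "H \<noteq> []" using length_ge_7 by auto
lemma h_diff_length: "n \<le> k \<Longrightarrow> h k = h (k - n)" using h_add_length[of "k - n"] by simp

lemma set_H_index: "z \<in> set H \<Longrightarrow> \<exists>k<n. z = h k"
  using set_H_image[of 0] by auto

lemma set_H_index_from: "z \<in> set H \<Longrightarrow> \<exists>k. a \<le> k \<and> k < a + n \<and> z = h k"
  using set_H_image[of a] by auto

lemma h_add_mod: "h (a + t) = h (a mod n + t)"
  unfolding h_def by (simp add: mod_add_left_eq)

lemma image_h_add_mod: "h ` {a .. a + d} = h ` {a mod n .. a mod n + d}"
proof
  show "h ` {a..a + d} \<subseteq> h ` {a mod n..a mod n + d}"
  proof
    fix z assume "z \<in> h ` {a..a + d}"
    then obtain k where k: "a \<le> k" "k \<le> a + d" "z = h k" by auto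
    then have "z = h (a mod n + (k - a))" using h_add_mod[of a "k - a"] by simp
    then show "z \<in> h ` {a mod n..a mod n + d}" using k by (intro image_eqI[of _ _ "a mod n + (k - a)"]) auto
  qed
next
  show "h ` {a mod n..a mod n + d} \<subseteq> h ` {a..a + d}"
  proof
    fix z assume "z \<in> h ` {a mod n..a mod n + d}"
    then obtain k where k: "a mod n \<le> k" "k \<le> a mod n + d" "z = h k" by auto
    then have "z = h (a + (k - a mod n))" using h_add_mod[of a "k - a mod n"] by simp
    then show "z \<in> h ` {a..a + d}" using k by (intro image_eqI[of _ _ "a + (k - a mod n)"]) auto
  qed
qed

lemma arc_eq_image_h: "i < n \<Longrightarrow> Defs.arc H i j = h ` {i .. i + (j + n - i) mod n}"
  unfolding Defs.arc_def h_def
proof (safe, goal_cases)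
  case (1 z k)
  then show ?case by (intro image_eqI[of _ _ "i + k"]) auto
next
  case (2 z k)
  then show ?case by (intro exI[of _ "k - i"]) auto
qed

lemma arc_eq_image_h_interval:
  assumes "a < b" "b < a + n"
  shows "Defs.arc H (b mod n) (a mod n) = h ` {b .. a + n}"
    and "Defs.arc H (a mod n) (b mod n) = h ` {a .. b}"
proof -
  have n0': "0 < n" using length_ge_7 by linarith
  have gen: "Defs.arc H (c mod n) (e mod n) = h ` {c .. c + d}" if "c + d = e + m * n" "d < n" for c d e m
  proof -
    have cm: "c mod n < n" "e mod n < n" using n0' by auto
    have "(c mod n + d) mod n = e mod n"
      using that by (metis mod_add_left_eq mod_mult_self1)
    then have "c mod n + d = e mod n \<or> c mod n + d = e mod n + n"
      using cm that(2) mod_eq_iff_within_two_periods[of "e mod n" "c mod n + d" n] by (cases "e mod n \<le> c mod n + d") (auto simp: mod_less)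
    then have "e mod n + n - c mod n = d + n \<or> e mod n + n - c mod n = d" by auto
    then have "(e mod n + n - c mod n) mod n = d" using that(2) by auto
    then have "Defs.arc H (c mod n) (e mod n) = h ` {c mod n .. c mod n + d}" using arc_eq_image_h[OF cm(1)] by simp
    also have "\<dots> = h ` {c .. c + d}" using image_h_add_mod[of c d] by simp
    finally show ?thesis .
  qed
  show "Defs.arc H (b mod n) (a mod n) = h ` {b .. a + n}"
    using gen[of b "a + n - b" a 1] assms by auto
  show "Defs.arc H (a mod n) (b mod n) = h ` {a .. b}"
    using gen[of a "b - a" b 0] assms by auto
qed

lemma nestedI:
  assumes w: "w1 \<notin> set H" "w2 \<notin> set H" and ab: "a < b" "b < a + n"
    and N1: "{z \<in> set H. E w1 z} \<subseteq> h ` {b .. a + n}"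
    and N2: "{z \<in> set H. E w2 z} \<subseteq> h ` {a .. b}"
  shows "nested E H w1 w2"
proof -
  have ne: "b mod n \<noteq> a mod n" using mod_eq_iff_within_two_periods[of a b n] ab by auto
  have n0': "0 < n" using length_ge_7 by linarith
  have lt: "b mod n < n" "a mod n < n" using n0' by auto
  have ar: "Defs.arc H (b mod n) (a mod n) = h ` {b .. a + n}" "Defs.arc H (a mod n) (b mod n) = h ` {a .. b}"
    using arc_eq_image_h_interval[OF ab] by auto
  have "\<exists>i j. i < n \<and> j < n \<and> i \<noteq> j \<and>
        ({z \<in> set H. E w1 z} \<subseteq> Defs.arc H i j \<and> {z \<in> set H. E w2 z} \<subseteq> Defs.arc H j i \<or>
         {z \<in> set H. E w2 z} \<subseteq> Defs.arc H i j \<and> {z \<in> set H. E w1 z} \<subseteq> Defs.arc H j i)"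
    apply (rule exI[of _ "b mod n"], rule exI[of _ "a mod n"])
    using lt ne N1 N2 ar by simp
  then show ?thesis unfolding nested_def using w by blast
qed

lemma nested_sym: "nested E H w1 w2 \<Longrightarrow> nested E H w2 w1"
  unfolding nested_def by blast

lemma obtain_sector:
  assumes wb: "\<not> E w (h b)" and wa: "E w (h a)" and ab: "a < b" "b < a + n"
  obtains x y where "a \<le> x" "x < b" "b < y" "y \<le> x + n" "E w (h x)" "E w (h y)"
    "\<And>k. x < k \<Longrightarrow> k < y \<Longrightarrow> \<not> E w (h k)"
proof -
  obtain x where x: "a \<le> x" "x < b" "E w (h x)" and xg: "\<And>k. x < k \<Longrightarrow> k < b \<Longrightarrow> \<not> E w (h k)"
    using obtain_greatest_below[of a b "\<lambda>k. E w (h k)"] wa ab by blast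
  have "b < x + n" "E w (h (x + n))" using x ab h_add_length by auto
  then obtain y where y: "b < y" "y \<le> x + n" "E w (h y)" and yl: "\<And>k. b < k \<Longrightarrow> k < y \<Longrightarrow> \<not> E w (h k)"
    using obtain_least_above[of b "x + n" "\<lambda>k. E w (h k)"] by blast
  have "\<not> E w (h k)" if "x < k" "k < y" for k
    using xg[of k] yl[of k] wb that by (cases k b rule: linorder_cases) auto
  then show ?thesis using that x y by blast
qed

lemma nested_if_single_neighbour:
  assumes w: "w1 \<notin> set H" "w2 \<notin> set H" and N: "{z \<in> set H. E w1 z} \<subseteq> {h i}"
  shows "nested E H w1 w2"
proof -
  have "nested E H w2 w1"
  proof (rule nestedI[OF w(2) w(1), of i "Suc i"])
    show "{z \<in> set H. E w2 z} \<subseteq> h ` {Suc i..i + n}" using set_H_image[of "Suc i"] by auto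
    show "{z \<in> set H. E w1 z} \<subseteq> h ` {i..Suc i}" using N by auto
  qed (use length_ge_7 in auto)
  then show ?thesis by (rule nested_sym)
qed

end

locale long_hole_in_C = long_hole +
  assumes no_theta: "\<not> has_theta V E" and no_pyramid: "\<not> has_pyramid V E"
    and no_prism: "\<not> has_prism V E" and no_turtle: "\<not> has_turtle V E"
begin

lemma two_neighbours_impossible:
  assumes wV: "w \<in> V" and wH: "w \<notin> set H"
    and ij: "i + 2 \<le> j" "j + 2 \<le> i + n"
    and wi: "E w (h i)" and wj: "E w (h j)"
    and only: "\<And>k. i \<le> k \<Longrightarrow> k < i + n \<Longrightarrow> E w (h k) \<Longrightarrow> k = i \<or> k = j"
  shows False
proof -
  obtain d where d: "j = i + 2 + d" using ij(1) by (metis add.commute le_Suc_ex)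
  obtain e where e: "i + n = j + 2 + e" using ij(2) by (metis le_Suc_ex)
  have adj: "\<And>k l. i \<le> k \<Longrightarrow> k < i+n \<Longrightarrow> i \<le> l \<Longrightarrow> l < i+n \<Longrightarrow>
     E (h k) (h l) = (l = k+1 \<or> k = l+1 \<or> l + 1 = k + n \<or> k + 1 = l + n)" using h_adj_iff[of i] length_ge_7 by auto
  have inj: "\<And>k l. i \<le> k \<Longrightarrow> k < i+n \<Longrightarrow> i \<le> l \<Longrightarrow> l < i+n \<Longrightarrow> h k = h l \<longleftrightarrow> k = l"
    using h_eq_iff[of i] by blast
  have img: "\<And>k S. i \<le> k \<Longrightarrow> k < i+n \<Longrightarrow> S \<subseteq> {i..<i+n} \<Longrightarrow> h k \<in> h ` S \<longleftrightarrow> k \<in> S"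
    using h_in_image_iff[of i] by blast
  have wne: "\<And>k. h k \<noteq> w" "\<And>k. w \<noteq> h k" using h_neq[OF wH] by metis+
  have onl: "\<And>k. i \<le> k \<Longrightarrow> k < i + n \<Longrightarrow> k \<noteq> i \<Longrightarrow> k \<noteq> j \<Longrightarrow> \<not> E (h k) w"
    using only E_sym by blast
  have onl': "\<And>k. i \<le> k \<Longrightarrow> k < i + n \<Longrightarrow> k \<noteq> i \<Longrightarrow> k \<noteq> j \<Longrightarrow> \<not> E w (h k)"
    using only by blast
  have I1: "interior_path V E (h i) (h j) [w]"
    unfolding interior_path_def using is_path_singleton[OF wV G] wne wi wj E_sym by auto
  have I2: "interior_path V E (h i) (h j) (seg (i+1) (i+1+d))"
    unfolding interior_path_def using seg_path[of "i+1" "i+1+d"] d e length_ge_7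
    by (auto simp: img inj adj)
  have I3: "interior_path V E (h i) (h j) (rev (seg (j+1) (j+1+e)))"
    unfolding interior_path_def using rev_seg_path[of "j+1" "j+1+e"] d e length_ge_7
    by (auto simp: img inj adj hd_rev last_rev)
  have s12: "anticomplete E [w] (seg (i+1) (i+1+d))"
    unfolding anticomplete_def using d e wne onl onl' by auto
  have s13: "anticomplete E [w] (rev (seg (j+1) (j+1+e)))"
    unfolding anticomplete_def using d e wne onl onl' by auto
  have s23: "anticomplete E (seg (i+1) (i+1+d)) (rev (seg (j+1) (j+1+e)))"
    unfolding anticomplete_def using d e length_ge_7 by (auto simp: img inj adj)
  have ab: "h i \<noteq> h j" "\<not> E (h i) (h j)" using d e length_ge_7 by (auto simp: inj adj)
  show False using has_thetaI[OF G h_in_V h_in_V ab I1 I2 I3 s12 s13 s23] no_theta by blast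
qed

lemma edge_and_vertex_neighbours_impossible:
  assumes wV: "w \<in> V" and wH: "w \<notin> set H"
    and ij: "i + 3 \<le> j" "j + 2 \<le> i + n"
    and w1: "E w (h (Suc i))" and w2: "E w (h j)" and w3: "E w (h (i + n))"
    and only: "\<And>k. Suc i \<le> k \<Longrightarrow> k \<le> i + n \<Longrightarrow> E w (h k) \<Longrightarrow> k = Suc i \<or> k = j \<or> k = i + n"
  shows False
proof -
  obtain jm where jm: "j = Suc jm" using ij by (cases j) auto
  have adj: "\<And>k l. Suc i \<le> k \<Longrightarrow> k < Suc i+n \<Longrightarrow> Suc i \<le> l \<Longrightarrow> l < Suc i+n \<Longrightarrow>
     E (h k) (h l) = (l = k+1 \<or> k = l+1 \<or> l + 1 = k + n \<or> k + 1 = l + n)" using h_adj_iff[of "Suc i"] length_ge_7 by auto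
  have inj: "\<And>k l. Suc i \<le> k \<Longrightarrow> k < Suc i+n \<Longrightarrow> Suc i \<le> l \<Longrightarrow> l < Suc i+n \<Longrightarrow> h k = h l \<longleftrightarrow> k = l"
    using h_eq_iff[of "Suc i"] by blast
  have img: "\<And>k S. Suc i \<le> k \<Longrightarrow> k < Suc i+n \<Longrightarrow> S \<subseteq> {Suc i..<Suc i+n} \<Longrightarrow> h k \<in> h ` S \<longleftrightarrow> k \<in> S"
    using h_in_image_iff[of "Suc i"] by blast
  have wne: "\<And>k. h k \<noteq> w" "\<And>k. w \<noteq> h k" using h_neq[OF wH] by metis+
  have wiff: "\<And>k. Suc i \<le> k \<Longrightarrow> k \<le> i + n \<Longrightarrow> E w (h k) \<longleftrightarrow> (k = Suc i \<or> k = j \<or> k = i + n)"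
    using only w1 w2 w3 by blast
  have wiff': "\<And>k. Suc i \<le> k \<Longrightarrow> k \<le> i + n \<Longrightarrow> E (h k) w \<longleftrightarrow> (k = Suc i \<or> k = j \<or> k = i + n)"
    using wiff E_sym by blast
  note F = adj inj img wne wiff wiff'
  let ?I1 = "[w]" and ?I2 = "rev (seg (Suc i) jm)" and ?I3 = "seg (Suc j) (i + n)"
  have I1: "branch V E (h j) ?I1"
    unfolding branch_def using is_path_singleton[OF wV G] ij length_ge_7 by (auto simp: F)
  have I2: "branch V E (h j) ?I2"
    unfolding branch_def using rev_seg_path[of "Suc i" jm] ij jm length_ge_7 by (auto simp: F)
  have I3: "branch V E (h j) ?I3"
    unfolding branch_def using seg_path[of "Suc j" "i + n"] ij jm length_ge_7 by (auto simp: F)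
  have s12: "meet_at_last E ?I1 ?I2" unfolding meet_at_last_def using ij jm length_ge_7 by (auto simp: F)
  have s13: "meet_at_last E ?I1 ?I3" unfolding meet_at_last_def using ij jm length_ge_7 by (auto simp: F)
  have wr: "\<And>z w. Suc i \<le> z \<Longrightarrow> w \<le> i + n \<Longrightarrow> Suc w = z + n \<Longrightarrow> z = Suc i \<and> w = i + n" by auto
  have s23: "meet_at_last E ?I2 ?I3" unfolding meet_at_last_def using ij jm length_ge_7 by (auto simp: F dest: wr)
  have H_ne_Nil: "H \<noteq> []" using length_ge_7 by auto
  have e: "E (h (Suc i)) (h (i + n))" using adj[of "Suc i" "i+n"] length_ge_7 H_ne_Nil by simp
  have t: "E (last ?I1) (last ?I2)" "E (last ?I1) (last ?I3)" "E (last ?I2) (last ?I3)"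
    using ij jm length_ge_7 w1 w3 e by (auto simp: F)
  have l: "\<not> (length ?I1 = 1 \<and> length ?I2 = 1)" "\<not> (length ?I1 = 1 \<and> length ?I3 = 1)"
    "\<not> (length ?I2 = 1 \<and> length ?I3 = 1)" using ij jm by auto
  show False using has_pyramidI[OF G h_in_V I1 I2 I3 s12 s13 s23 t l] no_pyramid by blast
qed

lemma two_nonadjacent_neighbours_impossible:
  assumes wV: "w \<in> V" and wH: "w \<notin> set H"
    and N: "{z \<in> set H. E w z} = {a, b}" and ab: "a \<noteq> b" "\<not> E a b"
  shows False
proof -
  have ordered: False if ij: "i < j" "j < n" and N': "{z \<in> set H. E w z} = {h i, h j}"
    and nij: "\<not> E (h i) (h j)" for i j
  proof (rule two_neighbours_impossible[OF wV wH, of i j])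
    have "j \<noteq> i + 1" "j + 1 \<noteq> i + n" using nij h_adj_iff[of 0 i j] ij length_ge_7 by auto
    then show "i + 2 \<le> j" "j + 2 \<le> i + n" using ij by auto
    show "E w (h i)" "E w (h j)" using N' by auto
  next
    fix k assume k: "i \<le> k" "k < i + n" "E w (h k)"
    then have "h k = h i \<or> h k = h j" using N' h_in_set by blast
    then show "k = i \<or> k = j" using h_eq_iff[of i k i] h_eq_iff[of i k j] k ij H_ne_Nil by auto
  qed
  have "a \<in> set H" "b \<in> set H" using N by auto
  then obtain i j where ij: "i < n" "a = h i" "j < n" "b = h j"
    using set_H_index by meson
  then consider "i < j" | "j < i" using ab by (cases i j rule: linorder_cases) auto
  then show False
  proof cases
    case 1 then show ?thesis using ordered[of i j] N ab ij by auto
  next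
    case 2 then show ?thesis using ordered[of j i] N ab ij E_sym by (auto simp: insert_commute)
  qed
qed

end
section \<open>Two non-adjacent vertices without a common edge\<close>

locale nonadj_pair = long_hole_in_C +
  fixes A B
  assumes AV: "A \<in> V" and BV: "B \<in> V" and AH: "A \<notin> set H" and BH: "B \<notin> set H"
    and AB: "A \<noteq> B" and nAB: "\<not> E A B"
    and no_common_edge: "\<And>i. \<not> (E A (h i) \<and> E A (h (Suc i)) \<and> E B (h i) \<and> E B (h (Suc i)))"
begin

lemma pair_swap: "nonadj_pair V E H B A"
  using AV BV AH BH AB nAB no_common_edge E_sym by unfold_locales blast+

lemma h_neq_AB: "h k \<noteq> A" "A \<noteq> h k" "h k \<noteq> B" "B \<noteq> h k" using h_neq[OF AH] h_neq[OF BH] by metis+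
lemma not_E_B_A: "\<not> E B A" using nAB E_sym by blast
lemma B_neq_A: "B \<noteq> A" using AB by blast

lemma pair_self: "nonadj_pair V E H A B" using nonadj_pair.pair_swap[OF pair_swap] .

lemma common_edge_impossible:
  assumes "a \<in> set H" "b \<in> set H" "E a b" "E A a" "E A b" "E B a" "E B b"
  shows False
proof -
  obtain i where i: "i < n" "a = h i" using set_H_index assms(1) by blast
  obtain j where j: "j < n" "b = h j" using set_H_index assms(2) by blast
  have "j = i + 1 \<or> i = j + 1 \<or> j + 1 = i + n \<or> i + 1 = j + n"
    using h_adj_iff[of 0 i j] assms(3) i j length_ge_7 by auto
  then consider (c1) "j = Suc i" | (c2) "i = Suc j" | (c3) "Suc j = i + n" | (c4) "Suc i = j + n" by auto
  then show False
  proof cases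
    case c1 then show ?thesis using no_common_edge[of i] assms i j by auto
  next
    case c2 then show ?thesis using no_common_edge[of j] assms i j by auto
  next
    case c3
    then have "h (Suc j) = a" using i j h_add_length[of i] by auto
    then show ?thesis using no_common_edge[of j] assms i j by auto
  next
    case c4
    then have "h (Suc i) = b" using i j h_add_length[of j] by auto
    then show ?thesis using no_common_edge[of i] assms i j by auto
  qed
qed

lemma three_common_neighbours_impossible:
  assumes "a \<in> set H" "b \<in> set H" "c \<in> set H" "a \<noteq> b" "a \<noteq> c" "b \<noteq> c"
    "E A a" "E A b" "E A c" "E B a" "E B b" "E B c"
  shows False
proof -
  have Es': "E a A" "E b A" "E c A" "E a B" "E b B" "E c B" using assms E_sym by blast+
  have na: "\<not> E a b" "\<not> E a c" "\<not> E b c" using common_edge_impossible assms by blast+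
  have inn: "interior_path V E A B [z]" if "z \<in> set H" "E A z" "E z B" for z
    unfolding interior_path_def using is_path_singleton[of z V E] that hole AH BH G unfolding is_hole_def by auto
  have sp: "anticomplete E [z] [w]" if "z \<noteq> w" "\<not> E z w" for z w unfolding anticomplete_def using that by auto
  show False using has_thetaI[OF G AV BV AB nAB inn[OF assms(1,7) Es'(4)] inn[OF assms(2,8) Es'(5)]
      inn[OF assms(3,9) Es'(6)] sp[OF assms(4) na(1)] sp[OF assms(5) na(2)] sp[OF assms(6) na(3)]] no_theta by blast
qed

end

section \<open>Interleaving sectors are impossible\<close>

text \<open>Interleaving sectors: \<open>x, y\<close> are consecutive neighbours of \<open>A\<close> and \<open>p, q\<close> consecutive
  neighbours of \<open>B\<close> on the hole, with \<open>p\<close> strictly inside the first sector and \<open>y\<close> strictly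
  inside the second. In the names of the case lemmas, the first tag describes the neighbours of
  \<open>B\<close> among positions \<open>x..p\<close> (\<open>alone\<close>: only \<open>p\<close>; \<open>twin\<close>: exactly \<open>p - 1\<close> and \<open>p\<close>; \<open>far\<close>: some
  neighbour at most \<open>p - 2\<close>), the second symmetrically those of \<open>A\<close> among \<open>y..q\<close> (only \<open>y\<close>;
  exactly \<open>y\<close> and \<open>y + 1\<close>; some neighbour at least \<open>y + 2\<close>).\<close>

locale interleaved = nonadj_pair +
  fixes x p y q :: nat
  assumes ord: "x < p" "p < y" "y < q" "q < x + n"
    and Ax: "E A (h x)" and Ay: "E A (h y)" and Ain: "\<And>k. x < k \<Longrightarrow> k < y \<Longrightarrow> \<not> E A (h k)"
    and Bp: "E B (h p)" and Bq: "E B (h q)" and Bin: "\<And>k. p < k \<Longrightarrow> k < q \<Longrightarrow> \<not> E B (h k)"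
begin

lemma window_adj_iff: "x \<le> k \<Longrightarrow> k < x+n \<Longrightarrow> x \<le> l \<Longrightarrow> l < x+n \<Longrightarrow>
     E (h k) (h l) = (l = k+1 \<or> k = l+1 \<or> l + 1 = k + n \<or> k + 1 = l + n)" using h_adj_iff[of x k l] length_ge_7 by auto
lemma window_h_eq_iff: "x \<le> k \<Longrightarrow> k < x+n \<Longrightarrow> x \<le> l \<Longrightarrow> l < x+n \<Longrightarrow> h k = h l \<longleftrightarrow> k = l"
  using h_eq_iff[of x] by blast
lemma window_h_in_image_iff: "x \<le> k \<Longrightarrow> k < x+n \<Longrightarrow> S \<subseteq> {x..<x+n} \<Longrightarrow> h k \<in> h ` S \<longleftrightarrow> k \<in> S"
  using h_in_image_iff[of x] by blast

lemma Ax': "E (h x) A" "E (h y) A" using Ax Ay E_sym by blast+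
lemma Bp': "E (h p) B" "E (h q) B" using Bp Bq E_sym by blast+

lemma Aiff: "x \<le> k \<Longrightarrow> k < y \<Longrightarrow> E A (h k) \<longleftrightarrow> k = x" "x \<le> k \<Longrightarrow> k < y \<Longrightarrow> E (h k) A \<longleftrightarrow> k = x"
  "x < k \<Longrightarrow> k \<le> y \<Longrightarrow> E A (h k) \<longleftrightarrow> k = y" "x < k \<Longrightarrow> k \<le> y \<Longrightarrow> E (h k) A \<longleftrightarrow> k = y"
  using Ax Ay Ain E_sym by (metis le_neq_implies_less)+
lemma Biff: "p \<le> k \<Longrightarrow> k < q \<Longrightarrow> E B (h k) \<longleftrightarrow> k = p" "p \<le> k \<Longrightarrow> k < q \<Longrightarrow> E (h k) B \<longleftrightarrow> k = p"
  "p < k \<Longrightarrow> k \<le> q \<Longrightarrow> E B (h k) \<longleftrightarrow> k = q" "p < k \<Longrightarrow> k \<le> q \<Longrightarrow> E (h k) B \<longleftrightarrow> k = q"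
  using Bp Bq Bin E_sym by (metis le_neq_implies_less)+

lemmas index_facts = window_adj_iff window_h_eq_iff window_h_in_image_iff h_neq_AB nAB not_E_B_A AB B_neq_A Ax Ay Ax' Bp Bq Bp' Aiff Biff h_in_V AV BV H_ne_Nil

lemma alone_alone:
  assumes nc: "q + 2 \<le> x + n"
    and Ta: "\<And>k. x \<le> k \<Longrightarrow> k \<le> p \<Longrightarrow> E B (h k) \<longleftrightarrow> k = p"
    and Ua: "\<And>k. y \<le> k \<Longrightarrow> k \<le> q \<Longrightarrow> E A (h k) \<longleftrightarrow> k = y"
    and yp: "p + 2 \<le> y"
  shows False
proof -
  obtain pm where pm: "p = Suc pm" using ord by (cases p) auto
  obtain d where d: "y = p + 2 + d" using yp by (metis add.commute le_Suc_ex)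
  have Ta': "\<And>k. x \<le> k \<Longrightarrow> k \<le> p \<Longrightarrow> E (h k) B \<longleftrightarrow> k = p" using Ta E_sym by blast
  have Ua': "\<And>k. y \<le> k \<Longrightarrow> k \<le> q \<Longrightarrow> E (h k) A \<longleftrightarrow> k = y" using Ua E_sym by blast
  note F = index_facts Ta Ta' Ua Ua'
  let ?a = "h p" and ?b = "h y"
  let ?I1 = "seg (Suc p) (Suc p + d)" and ?I2 = "rev (seg x pm) @ [A]" and ?I3 = "B # rev (seg (Suc y) q)"
  have I1: "interior_path V E ?a ?b ?I1"
    unfolding interior_path_def using seg_path[of "Suc p" "Suc p + d"] ord nc d length_ge_7 by (auto simp: F)
  have pI2: "is_path V E ?I2"
    by (rule is_path_snoc[OF G rev_seg_path]) (use ord pm nc length_ge_7 in \<open>auto simp: F last_rev\<close>)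
  have I2: "interior_path V E ?a ?b ?I2"
    unfolding interior_path_def using pI2 ord pm d nc length_ge_7 by (auto simp: F hd_rev)
  have pI3: "is_path V E ?I3"
    by (rule is_path_Cons[OF G rev_seg_path]) (use ord pm nc length_ge_7 in \<open>auto simp: F hd_rev\<close>)
  have I3: "interior_path V E ?a ?b ?I3"
    unfolding interior_path_def using pI3 ord pm d nc length_ge_7 by (auto simp: F last_rev)
  have s12: "anticomplete E ?I1 ?I2" unfolding anticomplete_def using ord pm d nc length_ge_7 by (auto simp: F)
  have s13: "anticomplete E ?I1 ?I3" unfolding anticomplete_def using ord pm d nc length_ge_7 by (auto simp: F)
  have s23: "anticomplete E ?I2 ?I3" unfolding anticomplete_def using ord pm d nc length_ge_7 by (auto simp: F)
  have ab: "?a \<noteq> ?b" "\<not> E ?a ?b" using ord d nc length_ge_7 by (auto simp: F)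
  show False using has_thetaI[OF G h_in_V h_in_V ab I1 I2 I3 s12 s13 s23] no_theta by blast
qed

lemma alone_twin:
  assumes nc: "q + 2 \<le> x + n"
    and Ta: "\<And>k. x \<le> k \<Longrightarrow> k \<le> p \<Longrightarrow> E B (h k) \<longleftrightarrow> k = p"
    and Ub: "Suc y \<le> q" "\<And>k. y \<le> k \<Longrightarrow> k \<le> q \<Longrightarrow> E A (h k) \<longleftrightarrow> (k = y \<or> k = Suc y)"
  shows False
proof -
  obtain pm where pm: "p = Suc pm" using ord by (cases p) auto
  have Ta': "\<And>k. x \<le> k \<Longrightarrow> k \<le> p \<Longrightarrow> E (h k) B \<longleftrightarrow> k = p" using Ta E_sym by blast
  have Ub': "\<And>k. y \<le> k \<Longrightarrow> k \<le> q \<Longrightarrow> E (h k) A \<longleftrightarrow> (k = y \<or> k = Suc y)" using Ub E_sym by blast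
  note F = index_facts Ta Ta' Ub(2) Ub'
  let ?I1 = "seg (Suc p) y" and ?I2 = "B # rev (seg (Suc y) q)" and ?I3 = "rev (seg x pm) @ [A]"
  have I1: "branch V E (h p) ?I1"
    unfolding branch_def using seg_path[of "Suc p" y] ord nc length_ge_7 by (auto simp: F)
  have pI2: "is_path V E ?I2"
    by (rule is_path_Cons[OF G rev_seg_path]) (use ord pm nc length_ge_7 Ub in \<open>auto simp: F hd_rev\<close>)
  have I2: "branch V E (h p) ?I2"
    unfolding branch_def using pI2 ord pm nc length_ge_7 Ub by (auto simp: F)
  have pI3: "is_path V E ?I3"
    by (rule is_path_snoc[OF G rev_seg_path]) (use ord pm nc length_ge_7 in \<open>auto simp: F last_rev\<close>)
  have I3: "branch V E (h p) ?I3"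
    unfolding branch_def using pI3 ord pm nc length_ge_7 by (auto simp: F hd_rev)
  have s12: "meet_at_last E ?I1 ?I2" unfolding meet_at_last_def using ord pm nc length_ge_7 Ub by (auto simp: F last_rev)
  have s13: "meet_at_last E ?I1 ?I3" unfolding meet_at_last_def using ord pm nc length_ge_7 by (auto simp: F)
  have s23: "meet_at_last E ?I2 ?I3" unfolding meet_at_last_def using ord pm nc length_ge_7 Ub by (auto simp: F last_rev)
  have t: "E (last ?I1) (last ?I2)" "E (last ?I1) (last ?I3)" "E (last ?I2) (last ?I3)"
    using ord nc length_ge_7 Ub by (auto simp: F last_rev)
  have l: "\<not> (length ?I1 = 1 \<and> length ?I2 = 1)" "\<not> (length ?I1 = 1 \<and> length ?I3 = 1)"
    "\<not> (length ?I2 = 1 \<and> length ?I3 = 1)" using ord pm by auto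
  show False using has_pyramidI[OF G h_in_V I1 I2 I3 s12 s13 s23 t l] no_pyramid by blast
qed

lemma alone_far:
  assumes nc: "q + 2 \<le> x + n"
    and Ta: "\<And>k. x \<le> k \<Longrightarrow> k \<le> p \<Longrightarrow> E B (h k) \<longleftrightarrow> k = p"
    and Ug: "y + 2 \<le> s" "s \<le> q" "\<And>k. s \<le> k \<Longrightarrow> k \<le> q \<Longrightarrow> E A (h k) \<longleftrightarrow> k = s"
  shows False
proof -
  obtain pm where pm: "p = Suc pm" using ord by (cases p) auto
  have Ta': "\<And>k. x \<le> k \<Longrightarrow> k \<le> p \<Longrightarrow> E (h k) B \<longleftrightarrow> k = p" using Ta E_sym by blast
  have Ug': "\<And>k. s \<le> k \<Longrightarrow> k \<le> q \<Longrightarrow> E (h k) A \<longleftrightarrow> k = s" using Ug E_sym by blast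
  note F = index_facts Ta Ta' Ug(3) Ug'
  let ?I1 = "rev (seg x pm)" and ?I2 = "seg (Suc p) y" and ?I3 = "B # rev (seg s q)"
  have I1: "interior_path V E (h p) A ?I1"
    unfolding interior_path_def using rev_seg_path[of x pm] ord pm nc length_ge_7 by (auto simp: F hd_rev last_rev)
  have I2: "interior_path V E (h p) A ?I2"
    unfolding interior_path_def using seg_path[of "Suc p" y] ord nc length_ge_7 by (auto simp: F)
  have pI3: "is_path V E ?I3"
    by (rule is_path_Cons[OF G rev_seg_path]) (use ord pm nc length_ge_7 Ug in \<open>auto simp: F hd_rev\<close>)
  have I3: "interior_path V E (h p) A ?I3"
    unfolding interior_path_def using pI3 ord pm nc length_ge_7 Ug by (auto simp: F last_rev)
  have s12: "anticomplete E ?I1 ?I2" unfolding anticomplete_def using ord pm nc length_ge_7 by (auto simp: F)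
  have s13: "anticomplete E ?I1 ?I3" unfolding anticomplete_def using ord pm nc length_ge_7 Ug by (auto simp: F)
  have s23: "anticomplete E ?I2 ?I3" unfolding anticomplete_def using ord pm nc length_ge_7 Ug by (auto simp: F)
  have ab: "h p \<noteq> A" "\<not> E (h p) A" using ord by (auto simp: F)
  show False using has_thetaI[OF G h_in_V AV ab I1 I2 I3 s12 s13 s23] no_theta by blast
qed

lemma twin_alone:
  assumes nc: "q + 2 \<le> x + n"
    and Tb: "p = Suc pm" "\<And>k. x \<le> k \<Longrightarrow> k \<le> p \<Longrightarrow> E B (h k) \<longleftrightarrow> (k = pm \<or> k = p)"
    and Ua: "\<And>k. y \<le> k \<Longrightarrow> k \<le> q \<Longrightarrow> E A (h k) \<longleftrightarrow> k = y"
  shows False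
proof -
  obtain ym where ym: "y = Suc ym" using ord by (cases y) auto
  have Tb': "\<And>k. x \<le> k \<Longrightarrow> k \<le> p \<Longrightarrow> E (h k) B \<longleftrightarrow> (k = pm \<or> k = p)" using Tb E_sym by blast
  have Ua': "\<And>k. y \<le> k \<Longrightarrow> k \<le> q \<Longrightarrow> E (h k) A \<longleftrightarrow> k = y" using Ua E_sym by blast
  note F = index_facts Tb(2) Tb' Ua Ua'
  let ?I1 = "rev (seg p ym)" and ?I2 = "A # seg x pm" and ?I3 = "seg (Suc y) q @ [B]"
  have I1: "branch V E (h y) ?I1"
    unfolding branch_def using rev_seg_path[of p ym] ord ym nc length_ge_7 by (auto simp: F hd_rev)
  have pI2: "is_path V E ?I2"
    by (rule is_path_Cons[OF G seg_path]) (use ord Tb nc length_ge_7 in \<open>auto simp: F\<close>)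
  have I2: "branch V E (h y) ?I2"
    unfolding branch_def using pI2 ord Tb nc length_ge_7 by (auto simp: F)
  have pI3: "is_path V E ?I3"
    by (rule is_path_snoc[OF G seg_path]) (use ord nc length_ge_7 in \<open>auto simp: F\<close>)
  have I3: "branch V E (h y) ?I3"
    unfolding branch_def using pI3 ord nc length_ge_7 by (auto simp: F)
  have s12: "meet_at_last E ?I1 ?I2" unfolding meet_at_last_def using ord ym Tb nc length_ge_7 by (auto simp: F last_rev)
  have s13: "meet_at_last E ?I1 ?I3" unfolding meet_at_last_def using ord ym nc length_ge_7 by (auto simp: F last_rev)
  have s23: "meet_at_last E ?I2 ?I3" unfolding meet_at_last_def using ord Tb nc length_ge_7 by (auto simp: F)
  have t: "E (last ?I1) (last ?I2)" "E (last ?I1) (last ?I3)" "E (last ?I2) (last ?I3)"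
    using ord ym Tb nc length_ge_7 by (auto simp: F last_rev)
  have l: "\<not> (length ?I1 = 1 \<and> length ?I2 = 1)" "\<not> (length ?I1 = 1 \<and> length ?I3 = 1)"
    "\<not> (length ?I2 = 1 \<and> length ?I3 = 1)" using ord Tb by auto
  show False using has_pyramidI[OF G h_in_V I1 I2 I3 s12 s13 s23 t l] no_pyramid by blast
qed

lemma twin_twin:
  assumes nc: "q + 2 \<le> x + n"
    and Tb: "p = Suc pm" "\<And>k. x \<le> k \<Longrightarrow> k \<le> p \<Longrightarrow> E B (h k) \<longleftrightarrow> (k = pm \<or> k = p)"
    and Ub: "Suc y \<le> q" "\<And>k. y \<le> k \<Longrightarrow> k \<le> q \<Longrightarrow> E A (h k) \<longleftrightarrow> (k = y \<or> k = Suc y)"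
  shows False
proof -
  have Tb': "\<And>k. x \<le> k \<Longrightarrow> k \<le> p \<Longrightarrow> E (h k) B \<longleftrightarrow> (k = pm \<or> k = p)" using Tb E_sym by blast
  have Ub': "\<And>k. y \<le> k \<Longrightarrow> k \<le> q \<Longrightarrow> E (h k) A \<longleftrightarrow> (k = y \<or> k = Suc y)" using Ub E_sym by blast
  note F = index_facts Tb(2) Tb' Ub(2) Ub'
  let ?P1 = "seg p y" and ?P2 = "rev (seg x pm) @ [A]" and ?P3 = "B # rev (seg (Suc y) q)"
  have p1: "is_path V E ?P1" using seg_path[of p y] ord nc by auto
  have p2: "is_path V E ?P2"
    by (rule is_path_snoc[OF G rev_seg_path]) (use ord Tb nc length_ge_7 in \<open>auto simp: F\<close>)
  have p3: "is_path V E ?P3"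
    by (rule is_path_Cons[OF G rev_seg_path]) (use ord nc length_ge_7 in \<open>auto simp: F\<close>)
  have s12: "meet_at_ends E ?P1 ?P2" unfolding meet_at_ends_def using ord Tb nc length_ge_7 by (auto simp: F)
  have s13: "meet_at_ends E ?P1 ?P3" unfolding meet_at_ends_def using ord nc length_ge_7 by (auto simp: F)
  have s23: "meet_at_ends E ?P2 ?P3" unfolding meet_at_ends_def using ord Tb nc length_ge_7 by (auto simp: F)
  have a: "E (hd ?P1) (hd ?P2)" "E (hd ?P1) (hd ?P3)" "E (hd ?P2) (hd ?P3)"
    using ord Tb nc length_ge_7 by (auto simp: F)
  have b: "E (last ?P1) (last ?P2)" "E (last ?P1) (last ?P3)" "E (last ?P2) (last ?P3)"
    using ord Tb nc length_ge_7 by (auto simp: F)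
  have l: "length ?P1 \<ge> 2" "length ?P2 \<ge> 2" "length ?P3 \<ge> 2" using ord Tb by auto
  show False using has_prismI[OF G p1 p2 p3 s12 s13 s23 a b l] no_prism by blast
qed

lemma twin_far:
  assumes nc: "q + 2 \<le> x + n"
    and Tb: "p = Suc pm" "\<And>k. x \<le> k \<Longrightarrow> k \<le> p \<Longrightarrow> E B (h k) \<longleftrightarrow> (k = pm \<or> k = p)"
    and Ug: "y + 2 \<le> s" "s \<le> q" "\<And>k. s \<le> k \<Longrightarrow> k \<le> q \<Longrightarrow> E A (h k) \<longleftrightarrow> k = s"
  shows False
proof -
  have Tb': "\<And>k. x \<le> k \<Longrightarrow> k \<le> p \<Longrightarrow> E (h k) B \<longleftrightarrow> (k = pm \<or> k = p)" using Tb E_sym by blast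
  have Ug': "\<And>k. s \<le> k \<Longrightarrow> k \<le> q \<Longrightarrow> E (h k) A \<longleftrightarrow> k = s" using Ug E_sym by blast
  note F = index_facts Tb(2) Tb' Ug(3) Ug'
  let ?I1 = "seg x pm" and ?I2 = "rev (seg p y)" and ?I3 = "seg s q @ [B]"
  have I1: "branch V E A ?I1"
    unfolding branch_def using seg_path[of x pm] ord Tb nc length_ge_7 by (auto simp: F)
  have I2: "branch V E A ?I2"
    unfolding branch_def using rev_seg_path[of p y] ord Tb nc length_ge_7 by (auto simp: F)
  have pI3: "is_path V E ?I3"
    by (rule is_path_snoc[OF G seg_path]) (use ord Tb Ug nc length_ge_7 in \<open>auto simp: F\<close>)
  have I3: "branch V E A ?I3"
    unfolding branch_def using pI3 ord Tb Ug nc length_ge_7 by (auto simp: F)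
  have s12: "meet_at_last E ?I1 ?I2" unfolding meet_at_last_def using ord Tb nc length_ge_7 by (auto simp: F)
  have s13: "meet_at_last E ?I1 ?I3" unfolding meet_at_last_def using ord Tb Ug nc length_ge_7 by (auto simp: F)
  have s23: "meet_at_last E ?I2 ?I3" unfolding meet_at_last_def using ord Tb Ug nc length_ge_7 by (auto simp: F)
  have t: "E (last ?I1) (last ?I2)" "E (last ?I1) (last ?I3)" "E (last ?I2) (last ?I3)"
    using ord Tb Ug nc length_ge_7 by (auto simp: F)
  have l: "\<not> (length ?I1 = 1 \<and> length ?I2 = 1)" "\<not> (length ?I1 = 1 \<and> length ?I3 = 1)"
    "\<not> (length ?I2 = 1 \<and> length ?I3 = 1)" using ord Tb Ug by auto
  show False using has_pyramidI[OF G AV I1 I2 I3 s12 s13 s23 t l] no_pyramid by blast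
qed

lemma far_alone:
  assumes nc: "q + 2 \<le> x + n"
    and Tg: "x \<le> r1" "r1 + 2 \<le> p" "\<And>k. x \<le> k \<Longrightarrow> k \<le> r1 \<Longrightarrow> E B (h k) \<longleftrightarrow> k = r1"
    and Ua: "\<And>k. y \<le> k \<Longrightarrow> k \<le> q \<Longrightarrow> E A (h k) \<longleftrightarrow> k = y"
  shows False
proof -
  obtain ym where ym: "y = Suc ym" using ord by (cases y) auto
  have Tg': "\<And>k. x \<le> k \<Longrightarrow> k \<le> r1 \<Longrightarrow> E (h k) B \<longleftrightarrow> k = r1" using Tg E_sym by blast
  have Ua': "\<And>k. y \<le> k \<Longrightarrow> k \<le> q \<Longrightarrow> E (h k) A \<longleftrightarrow> k = y" using Ua E_sym by blast
  note F = index_facts Tg(3) Tg' Ua Ua'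
  let ?I1 = "seg (Suc y) q" and ?I2 = "rev (seg p ym)" and ?I3 = "A # seg x r1"
  have I1: "interior_path V E (h y) B ?I1"
    unfolding interior_path_def using seg_path[of "Suc y" q] ord nc length_ge_7 by (auto simp: F)
  have I2: "interior_path V E (h y) B ?I2"
    unfolding interior_path_def using rev_seg_path[of p ym] ord ym nc length_ge_7 by (auto simp: F)
  have pI3: "is_path V E ?I3"
    by (rule is_path_Cons[OF G seg_path]) (use ord Tg nc length_ge_7 in \<open>auto simp: F\<close>)
  have I3: "interior_path V E (h y) B ?I3"
    unfolding interior_path_def using pI3 ord Tg nc length_ge_7 by (auto simp: F)
  have s12: "anticomplete E ?I1 ?I2" unfolding anticomplete_def using ord ym nc length_ge_7 by (auto simp: F)
  have s13: "anticomplete E ?I1 ?I3" unfolding anticomplete_def using ord Tg nc length_ge_7 by (auto simp: F)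
  have s23: "anticomplete E ?I2 ?I3" unfolding anticomplete_def using ord ym Tg nc length_ge_7 by (auto simp: F)
  have ab: "h y \<noteq> B" "\<not> E (h y) B" using ord by (auto simp: F)
  show False using has_thetaI[OF G h_in_V BV ab I1 I2 I3 s12 s13 s23] no_theta by blast
qed

lemma far_twin:
  assumes nc: "q + 2 \<le> x + n"
    and Tg: "x \<le> r1" "r1 + 2 \<le> p" "\<And>k. x \<le> k \<Longrightarrow> k \<le> r1 \<Longrightarrow> E B (h k) \<longleftrightarrow> k = r1"
    and Ub: "Suc y \<le> q" "\<And>k. y \<le> k \<Longrightarrow> k \<le> q \<Longrightarrow> E A (h k) \<longleftrightarrow> (k = y \<or> k = Suc y)"
  shows False
proof -
  have Tg': "\<And>k. x \<le> k \<Longrightarrow> k \<le> r1 \<Longrightarrow> E (h k) B \<longleftrightarrow> k = r1" using Tg E_sym by blast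
  have Ub': "\<And>k. y \<le> k \<Longrightarrow> k \<le> q \<Longrightarrow> E (h k) A \<longleftrightarrow> (k = y \<or> k = Suc y)" using Ub E_sym by blast
  note F = index_facts Tg(3) Tg' Ub(2) Ub'
  let ?I1 = "seg p y" and ?I2 = "rev (seg (Suc y) q)" and ?I3 = "rev (seg x r1) @ [A]"
  have I1: "branch V E B ?I1"
    unfolding branch_def using seg_path[of p y] ord nc length_ge_7 by (auto simp: F)
  have I2: "branch V E B ?I2"
    unfolding branch_def using rev_seg_path[of "Suc y" q] ord nc length_ge_7 by (auto simp: F)
  have pI3: "is_path V E ?I3"
    by (rule is_path_snoc[OF G rev_seg_path]) (use ord Tg nc length_ge_7 in \<open>auto simp: F\<close>)
  have I3: "branch V E B ?I3"
    unfolding branch_def using pI3 ord Tg nc length_ge_7 by (auto simp: F)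
  have s12: "meet_at_last E ?I1 ?I2" unfolding meet_at_last_def using ord nc length_ge_7 by (auto simp: F)
  have s13: "meet_at_last E ?I1 ?I3" unfolding meet_at_last_def using ord Tg nc length_ge_7 by (auto simp: F)
  have s23: "meet_at_last E ?I2 ?I3" unfolding meet_at_last_def using ord Tg nc length_ge_7 by (auto simp: F)
  have t: "E (last ?I1) (last ?I2)" "E (last ?I1) (last ?I3)" "E (last ?I2) (last ?I3)"
    using ord Tg nc length_ge_7 by (auto simp: F)
  have l: "\<not> (length ?I1 = 1 \<and> length ?I2 = 1)" "\<not> (length ?I1 = 1 \<and> length ?I3 = 1)"
    "\<not> (length ?I2 = 1 \<and> length ?I3 = 1)" using ord Tg by auto
  show False using has_pyramidI[OF G BV I1 I2 I3 s12 s13 s23 t l] no_pyramid by blast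
qed

lemma far_far:
  assumes nc: "q + 2 \<le> x + n"
    and Tg: "x \<le> r1" "r1 + 2 \<le> p" "\<And>k. x \<le> k \<Longrightarrow> k \<le> r1 \<Longrightarrow> E B (h k) \<longleftrightarrow> k = r1"
    and Ug: "y + 2 \<le> s" "s \<le> q" "\<And>k. s \<le> k \<Longrightarrow> k \<le> q \<Longrightarrow> E A (h k) \<longleftrightarrow> k = s"
  shows False
proof -
  have Tg': "\<And>k. x \<le> k \<Longrightarrow> k \<le> r1 \<Longrightarrow> E (h k) B \<longleftrightarrow> k = r1" using Tg E_sym by blast
  have Ug': "\<And>k. s \<le> k \<Longrightarrow> k \<le> q \<Longrightarrow> E (h k) A \<longleftrightarrow> k = s" using Ug E_sym by blast
  note F = index_facts Tg(3) Tg' Ug(3) Ug'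
  let ?I1 = "rev (seg p y)" and ?I2 = "seg x r1" and ?I3 = "seg s q"
  have I1: "interior_path V E A B ?I1"
    unfolding interior_path_def using rev_seg_path[of p y] ord nc length_ge_7 by (auto simp: F)
  have I2: "interior_path V E A B ?I2"
    unfolding interior_path_def using seg_path[of x r1] ord Tg nc length_ge_7 by (auto simp: F)
  have I3: "interior_path V E A B ?I3"
    unfolding interior_path_def using seg_path[of s q] ord Ug nc length_ge_7 by (auto simp: F)
  have s12: "anticomplete E ?I1 ?I2" unfolding anticomplete_def using ord Tg nc length_ge_7 by (auto simp: F)
  have s13: "anticomplete E ?I1 ?I3" unfolding anticomplete_def using ord Ug nc length_ge_7 by (auto simp: F)
  have s23: "anticomplete E ?I2 ?I3" unfolding anticomplete_def using ord Tg Ug nc length_ge_7 by (auto simp: F)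
  show False using has_thetaI[OF G AV BV AB nAB I1 I2 I3 s12 s13 s23] no_theta by blast
qed

lemma B_before_p_cases:
  obtains (a) "\<And>k. x \<le> k \<Longrightarrow> k \<le> p \<Longrightarrow> E B (h k) \<longleftrightarrow> k = p"
  | (b) pm where "p = Suc pm" "\<And>k. x \<le> k \<Longrightarrow> k \<le> p \<Longrightarrow> E B (h k) \<longleftrightarrow> (k = pm \<or> k = p)"
  | (g) r1 where "x \<le> r1" "r1 + 2 \<le> p" "\<And>k. x \<le> k \<Longrightarrow> k \<le> r1 \<Longrightarrow> E B (h k) \<longleftrightarrow> k = r1"
proof (cases "\<exists>k. x \<le> k \<and> k + 2 \<le> p \<and> E B (h k)")
  case True
  define r1 where "r1 = (LEAST k. x \<le> k \<and> k + 2 \<le> p \<and> E B (h k))"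
  have r1: "x \<le> r1 \<and> r1 + 2 \<le> p \<and> E B (h r1)" using LeastI_ex[OF True] unfolding r1_def .
  have "E B (h k) \<longleftrightarrow> k = r1" if "x \<le> k" "k \<le> r1" for k
  proof
    assume "E B (h k)"
    then have "r1 \<le> k" unfolding r1_def using that r1 by (intro Least_le) auto
    then show "k = r1" using that by auto
  qed (use r1 in auto)
  then show ?thesis using g r1 by blast
next
  case False
  obtain pm where pm: "p = Suc pm" using ord by (cases p) auto
  show ?thesis
  proof (cases "E B (h pm)")
    case True
    have "E B (h k) \<longleftrightarrow> (k = pm \<or> k = p)" if "x \<le> k" "k \<le> p" for k
    proof -
      have "k = p \<or> k = pm \<or> k + 2 \<le> p" using that pm by auto
      then show ?thesis using False True that Bp by auto
    qed
    then show ?thesis using b pm by blast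
  next
    case False': False
    have "E B (h k) \<longleftrightarrow> k = p" if "x \<le> k" "k \<le> p" for k
    proof -
      have "k = p \<or> k = pm \<or> k + 2 \<le> p" using that pm by auto
      then show ?thesis using False False' that Bp by auto
    qed
    then show ?thesis using a by blast
  qed
qed

lemma A_after_y_cases:
  obtains (a) "\<And>k. y \<le> k \<Longrightarrow> k \<le> q \<Longrightarrow> E A (h k) \<longleftrightarrow> k = y"
  | (b) "Suc y \<le> q" "\<And>k. y \<le> k \<Longrightarrow> k \<le> q \<Longrightarrow> E A (h k) \<longleftrightarrow> (k = y \<or> k = Suc y)"
  | (g) s where "y + 2 \<le> s" "s \<le> q" "\<And>k. s \<le> k \<Longrightarrow> k \<le> q \<Longrightarrow> E A (h k) \<longleftrightarrow> k = s"
proof (cases "\<exists>k. y + 2 \<le> k \<and> k \<le> q \<and> E A (h k)")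
  case True
  then obtain k0 where k0: "y + 2 \<le> k0 \<and> k0 \<le> q \<and> E A (h k0)" by blast
  define s where "s = (GREATEST k. y + 2 \<le> k \<and> k \<le> q \<and> E A (h k))"
  have bnd: "\<And>k. (y + 2 \<le> k \<and> k \<le> q \<and> E A (h k)) \<Longrightarrow> k \<le> q" by blast
  have s: "y + 2 \<le> s \<and> s \<le> q \<and> E A (h s)" using GreatestI_nat[of "\<lambda>k. y + 2 \<le> k \<and> k \<le> q \<and> E A (h k)" k0 q, OF k0 bnd] unfolding s_def .
  have "E A (h k) \<longleftrightarrow> k = s" if "s \<le> k" "k \<le> q" for k
  proof
    assume "E A (h k)"
    then have "k \<le> s" unfolding s_def using that s by (intro Greatest_le_nat[of _ k q]) auto
    then show "k = s" using that by auto
  qed (use s in auto)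
  then show ?thesis using g s by blast
next
  case False
  show ?thesis
  proof (cases "E A (h (Suc y))")
    case True
    have "Suc y \<le> q"
    proof (rule ccontr)
      assume "\<not> Suc y \<le> q" then show False using ord by auto
    qed
    moreover have "E A (h k) \<longleftrightarrow> (k = y \<or> k = Suc y)" if "y \<le> k" "k \<le> q" for k
    proof -
      have "k = y \<or> k = Suc y \<or> y + 2 \<le> k" using that by auto
      then show ?thesis using False True that Ay by auto
    qed
    ultimately show ?thesis using b by blast
  next
    case False': False
    have "E A (h k) \<longleftrightarrow> k = y" if "y \<le> k" "k \<le> q" for k
    proof -
      have "k = y \<or> k = Suc y \<or> y + 2 \<le> k" using that by auto
      then show ?thesis using False False' that Ay by auto
    qed
    then show ?thesis using a by blast
  qed
qed

lemma open_case:
  assumes nc: "q + 2 \<le> x + n"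
    and nbad: "\<not> (y = Suc p \<and> (\<forall>k. x \<le> k \<longrightarrow> k < p \<longrightarrow> \<not> E B (h k)) \<and> (\<forall>k. y < k \<longrightarrow> k \<le> q \<longrightarrow> \<not> E A (h k)))"
  shows False
proof (cases rule: B_before_p_cases)
  case a
  show ?thesis
  proof (cases rule: A_after_y_cases)
    case a': a
    have "\<not> y = Suc p" using nbad a a' by auto
    then have "p + 2 \<le> y" using ord by auto
    then show ?thesis using alone_alone[OF nc] a a' by blast
  next
    case b' : b then show ?thesis using alone_twin[OF nc a] by blast
  next
    case (g s) then show ?thesis using alone_far[OF nc a] by blast
  qed
next
  case (b pm)
  show ?thesis
  proof (cases rule: A_after_y_cases)
    case a': a then show ?thesis using twin_alone[OF nc b] by blast
  next
    case b' : b then show ?thesis using twin_twin[OF nc b] by blast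
  next
    case (g s) then show ?thesis using twin_far[OF nc b] by blast
  qed
next
  case (g r1)
  show ?thesis
  proof (cases rule: A_after_y_cases)
    case a': a then show ?thesis using far_alone[OF nc g] by blast
  next
    case b' : b then show ?thesis using far_twin[OF nc g] by blast
  next
    case (g s) then show ?thesis using far_far[OF nc \<open>x \<le> r1\<close> \<open>r1 + 2 \<le> p\<close>] \<open>\<And>k. x \<le> k \<Longrightarrow> k \<le> r1 \<Longrightarrow> E B (h k) = (k = r1)\<close> by blast
  qed
qed

text \<open>Wrapped cases: \<open>q + 1 = x + n\<close>, i.e. \<open>h q\<close> and \<open>h x\<close> are adjacent on the hole.\<close>

lemma wrapped_far_far:
  assumes cyc: "q + 1 = x + n" and c0: "\<not> E B (h x)" "\<not> E A (h q)"
    and Tg: "x \<le> r1" "r1 + 2 \<le> p" "\<And>k. x \<le> k \<Longrightarrow> k \<le> r1 \<Longrightarrow> E B (h k) \<longleftrightarrow> k = r1"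
    and Ug: "y + 2 \<le> s" "s \<le> q" "\<And>k. s \<le> k \<Longrightarrow> k \<le> q \<Longrightarrow> E A (h k) \<longleftrightarrow> k = s"
  shows False
proof -
  have r1x: "Suc x \<le> r1" using Tg c0 by (cases "r1 = x") auto
  have Tg': "\<And>k. x \<le> k \<Longrightarrow> k \<le> r1 \<Longrightarrow> E (h k) B \<longleftrightarrow> k = r1" using Tg E_sym by blast
  have c0': "\<not> E (h x) B" "\<not> E (h q) A" using c0 E_sym by blast+
  note F = index_facts Tg(3) Tg' c0 c0'
  let ?I1 = "[h q]" and ?I2 = "seg (Suc x) r1" and ?I3 = "A # rev (seg p y)"
  have I1: "interior_path V E (h x) B ?I1"
    unfolding interior_path_def using is_path_singleton[OF h_in_V G] ord cyc length_ge_7 by (auto simp: F)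
  have I2: "interior_path V E (h x) B ?I2"
    unfolding interior_path_def using seg_path[of "Suc x" r1] ord cyc r1x Tg length_ge_7 by (auto simp: F)
  have pI3: "is_path V E ?I3"
    by (rule is_path_Cons[OF G rev_seg_path]) (use ord cyc length_ge_7 in \<open>auto simp: F\<close>)
  have I3: "interior_path V E (h x) B ?I3"
    unfolding interior_path_def using pI3 ord cyc Tg Ug length_ge_7 by (auto simp: F)
  have s12: "anticomplete E ?I1 ?I2" unfolding anticomplete_def using ord cyc Tg r1x length_ge_7 by (auto simp: F)
  have s13: "anticomplete E ?I1 ?I3" unfolding anticomplete_def using ord cyc Ug length_ge_7 by (auto simp: F)
  have s23: "anticomplete E ?I2 ?I3" unfolding anticomplete_def using ord cyc Tg r1x length_ge_7 by (auto simp: F)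
  have ab: "h x \<noteq> B" "\<not> E (h x) B" using c0' by (auto simp: F)
  show False using has_thetaI[OF G h_in_V BV ab I1 I2 I3 s12 s13 s23] no_theta by blast
qed

lemma wrapped_Bx_turtle:
  assumes cyc: "q + 1 = x + n" and c1: "E B (h x)" "\<not> E A (h q)" and px: "p = Suc x"
    and t: "y < t" "t < s" "s < q" "E A (h t)" "E A (h s)"
  shows False
proof -
  obtain qm where qm: "q = Suc qm" using ord by (cases q) auto
  have c1': "E (h x) B" "\<not> E (h q) A" using c1 E_sym by blast+
  note F = index_facts c1 c1'
  let ?P1 = "[h (Suc x), B, h q]" and ?P2 = "seg (Suc (Suc x)) qm"
  have p1: "is_path V E ?P1"
  proof (rule is_path_Cons[OF G])
    show "is_path V E [B, h q]" by (rule is_path_Cons[OF G is_path_singleton[OF h_in_V G]]) (use ord in \<open>auto simp: F\<close>)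
  qed (use ord px cyc length_ge_7 in \<open>auto simp: F\<close>)
  have p2: "is_path V E ?P2" using seg_path[of "Suc (Suc x)" qm] ord px qm cyc length_ge_7 by auto
  have s: "meet_at_ends E ?P1 ?P2" unfolding meet_at_ends_def using ord px qm cyc length_ge_7 by (auto simp: F)
  have a: "E (hd ?P1) (hd ?P2)" "E (last ?P1) (last ?P2)" using ord px qm cyc length_ge_7 by (auto simp: F)
  have xn: "h x \<notin> set ?P1 \<union> set ?P2" "A \<notin> set ?P1 \<union> set ?P2" using ord px qm cyc length_ge_7 by (auto simp: F)
  have x1: "h (Suc x) \<in> set ?P1" "B \<in> set ?P1" "h q \<in> set ?P1" "E (h x) (h (Suc x))" "E (h x) B" "E (h x) (h q)"
    "h (Suc x) \<noteq> B" "h (Suc x) \<noteq> h q" "B \<noteq> h q" using ord px qm cyc length_ge_7 by (auto simp: F)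
  have y1: "h y \<in> set ?P2" "h t \<in> set ?P2" "h s \<in> set ?P2" "E A (h y)" "E A (h t)" "E A (h s)"
    "h y \<noteq> h t" "h y \<noteq> h s" "h t \<noteq> h s" using ord px qm cyc length_ge_7 t by (auto simp: F)
  have xP2: "\<forall>z\<in>set ?P2. \<not> E (h x) z" using ord px qm cyc length_ge_7 by (auto simp: F)
  have yP1: "\<forall>z\<in>set ?P1. \<not> E A z" using ord px cyc length_ge_7 by (auto simp: F)
  have "E (h x) A" using Ax E_sym by blast
  then show False using has_turtleI[OF G p1 p2 s a h_in_V AV xn _ x1 y1 xP2 yP1] no_turtle by blast
qed

lemma wrapped_Bx_theta:
  assumes cyc: "q + 1 = x + n" and c1: "E B (h x)" "\<not> E A (h q)" and px: "p = Suc x"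
    and s: "y + 2 \<le> s" "s < q" "\<And>k. y \<le> k \<Longrightarrow> k \<le> q \<Longrightarrow> E A (h k) \<longleftrightarrow> (k = y \<or> k = s)"
  shows False
proof -
  obtain ym where ym: "y = Suc ym" using ord by (cases y) auto
  obtain sm where sm: "s = Suc sm" using s by (cases s) auto
  have c1': "E (h x) B" "\<not> E (h q) A" using c1 E_sym by blast+
  have s': "\<And>k. y \<le> k \<Longrightarrow> k \<le> q \<Longrightarrow> E (h k) A \<longleftrightarrow> (k = y \<or> k = s)" using s E_sym by blast
  note F = index_facts c1 c1' s(3) s'
  let ?I1 = "[A]" and ?I2 = "seg (Suc y) sm" and ?I3 = "rev (seg p ym) @ [B] @ rev (seg (Suc s) q)"
  have I1: "interior_path V E (h y) (h s) ?I1"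
    unfolding interior_path_def using is_path_singleton[OF AV G] ord s length_ge_7 by (auto simp: F)
  have I2: "interior_path V E (h y) (h s) ?I2"
    unfolding interior_path_def using seg_path[of "Suc y" sm] ord s sm cyc length_ge_7 by (auto simp: F)
  have pa: "is_path V E (rev (seg p ym) @ [B])"
    by (rule is_path_snoc[OF G rev_seg_path]) (use ord ym px cyc length_ge_7 in \<open>auto simp: F\<close>)
  have pI3: "is_path V E ?I3"
  proof -
    have "is_path V E ((rev (seg p ym) @ [B]) @ rev (seg (Suc s) q))"
      by (rule is_path_append[OF G pa rev_seg_path]) (use ord ym px s cyc length_ge_7 in \<open>auto simp: F\<close>)
    then show ?thesis by simp
  qed
  have I3: "interior_path V E (h y) (h s) ?I3"
    unfolding interior_path_def using pI3 ord ym px s cyc length_ge_7 by (auto simp: F)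
  have s12: "anticomplete E ?I1 ?I2" unfolding anticomplete_def using ord s sm cyc length_ge_7 by (auto simp: F)
  have s13: "anticomplete E ?I1 ?I3" unfolding anticomplete_def using ord ym px s cyc length_ge_7 by (auto simp: F)
  have s23: "anticomplete E ?I2 ?I3" unfolding anticomplete_def using ord ym sm px s cyc length_ge_7 by (auto simp: F)
  have ab: "h y \<noteq> h s" "\<not> E (h y) (h s)" using ord s cyc length_ge_7 by (auto simp: F)
  show False using has_thetaI[OF G h_in_V h_in_V ab I1 I2 I3 s12 s13 s23] no_theta by blast
qed

lemma wrapped_Aq_turtle:
  assumes cyc: "q + 1 = x + n" and c2: "E A (h q)" "\<not> E B (h x)" and yq: "y + 1 = q"
    and t: "x < r1" "r1 < t" "t < p" "E B (h r1)" "E B (h t)"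
  shows False
proof -
  obtain ym where ym: "y = Suc ym" using ord by (cases y) auto
  have c2': "E (h q) A" "\<not> E (h x) B" using c2 E_sym by blast+
  note F = index_facts c2 c2'
  let ?P1 = "[h x, A, h y]" and ?P2 = "seg (Suc x) ym"
  have p1: "is_path V E ?P1"
  proof (rule is_path_Cons[OF G])
    show "is_path V E [A, h y]" by (rule is_path_Cons[OF G is_path_singleton[OF h_in_V G]]) (use ord in \<open>auto simp: F\<close>)
  qed (use ord yq cyc length_ge_7 in \<open>auto simp: F\<close>)
  have p2: "is_path V E ?P2" using seg_path[of "Suc x" ym] ord ym cyc length_ge_7 by auto
  have s: "meet_at_ends E ?P1 ?P2" unfolding meet_at_ends_def using ord ym yq cyc length_ge_7 by (auto simp: F)
  have a: "E (hd ?P1) (hd ?P2)" "E (last ?P1) (last ?P2)" using ord ym cyc length_ge_7 by (auto simp: F)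
  have xn: "h q \<notin> set ?P1 \<union> set ?P2" "B \<notin> set ?P1 \<union> set ?P2" using ord ym yq cyc length_ge_7 by (auto simp: F)
  have x1: "h x \<in> set ?P1" "A \<in> set ?P1" "h y \<in> set ?P1" "E (h q) (h x)" "E (h q) A" "E (h q) (h y)"
    "h x \<noteq> A" "h x \<noteq> h y" "A \<noteq> h y" using ord ym yq cyc length_ge_7 by (auto simp: F)
  have y1: "h r1 \<in> set ?P2" "h t \<in> set ?P2" "h p \<in> set ?P2" "E B (h r1)" "E B (h t)" "E B (h p)"
    "h r1 \<noteq> h t" "h r1 \<noteq> h p" "h t \<noteq> h p" using ord ym cyc length_ge_7 t by (auto simp: F)
  have xP2: "\<forall>z\<in>set ?P2. \<not> E (h q) z" using ord ym yq cyc length_ge_7 by (auto simp: F)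
  have yP1: "\<forall>z\<in>set ?P1. \<not> E B z" using ord ym yq cyc length_ge_7 by (auto simp: F)
  have "E (h q) B" using Bq E_sym by blast
  then show False using has_turtleI[OF G p1 p2 s a h_in_V BV xn _ x1 y1 xP2 yP1] no_turtle by blast
qed

lemma wrapped_Aq_theta:
  assumes cyc: "q + 1 = x + n" and c2: "E A (h q)" "\<not> E B (h x)" and yq: "y + 1 = q"
    and r: "x < r1" "r1 + 2 \<le> p" "\<And>k. x \<le> k \<Longrightarrow> k \<le> p \<Longrightarrow> E B (h k) \<longleftrightarrow> (k = r1 \<or> k = p)"
  shows False
proof -
  obtain pm where pm: "p = Suc pm" using ord by (cases p) auto
  obtain rm where rm: "r1 = Suc rm" using r by (cases r1) auto
  have c2': "E (h q) A" "\<not> E (h x) B" using c2 E_sym by blast+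
  have r': "\<And>k. x \<le> k \<Longrightarrow> k \<le> p \<Longrightarrow> E (h k) B \<longleftrightarrow> (k = r1 \<or> k = p)" using r E_sym by blast
  note F = index_facts c2 c2' r(3) r'
  let ?I1 = "[B]" and ?I2 = "rev (seg (Suc r1) pm)" and ?I3 = "seg (Suc p) y @ [A] @ seg x rm"
  have I1: "interior_path V E (h p) (h r1) ?I1"
    unfolding interior_path_def using is_path_singleton[OF BV G] ord r length_ge_7 by (auto simp: F)
  have I2: "interior_path V E (h p) (h r1) ?I2"
    unfolding interior_path_def using rev_seg_path[of "Suc r1" pm] ord r pm cyc length_ge_7 by (auto simp: F)
  have pa: "is_path V E (seg (Suc p) y @ [A])"
    by (rule is_path_snoc[OF G seg_path]) (use ord cyc length_ge_7 in \<open>auto simp: F\<close>)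
  have pI3: "is_path V E ?I3"
  proof -
    have "is_path V E ((seg (Suc p) y @ [A]) @ seg x rm)"
      by (rule is_path_append[OF G pa seg_path]) (use ord r rm yq cyc length_ge_7 in \<open>auto simp: F\<close>)
    then show ?thesis by simp
  qed
  have I3: "interior_path V E (h p) (h r1) ?I3"
    unfolding interior_path_def using pI3 ord r rm yq cyc length_ge_7 by (auto simp: F)
  have s12: "anticomplete E ?I1 ?I2" unfolding anticomplete_def using ord r pm cyc length_ge_7 by (auto simp: F)
  have s13: "anticomplete E ?I1 ?I3" unfolding anticomplete_def using ord r rm yq cyc length_ge_7 by (auto simp: F)
  have s23: "anticomplete E ?I2 ?I3" unfolding anticomplete_def using ord r pm rm yq cyc length_ge_7 by (auto simp: F)
  have ab: "h p \<noteq> h r1" "\<not> E (h p) (h r1)" using ord r cyc length_ge_7 by (auto simp: F)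
  show False using has_thetaI[OF G h_in_V h_in_V ab I1 I2 I3 s12 s13 s23] no_theta by blast
qed

lemma wrapped_B_alone:
  assumes cyc: "q + 1 = x + n"
    and Ta: "\<And>k. x \<le> k \<Longrightarrow> k \<le> p \<Longrightarrow> E B (h k) \<longleftrightarrow> k = p"
  shows False
proof (rule two_neighbours_impossible[OF BV BH, of p q])
  show "p + 2 \<le> q" "q + 2 \<le> p + n" using ord cyc by auto
  show "E B (h p)" "E B (h q)" by (rule Bp, rule Bq)
next
  fix k assume k: "p \<le> k" "k < p + n" "E B (h k)"
  show "k = p \<or> k = q"
  proof (cases "k \<le> q")
    case True
    then show ?thesis using k Biff(1)[of k] by (cases "k = q") auto
  next
    case False
    then have "n \<le> k" "x \<le> k - n" "k - n < p" using k cyc by auto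
    then show ?thesis using k h_diff_length[of k] Ta[of "k - n"] by auto
  qed
qed

lemma wrapped_B_twin:
  assumes cyc: "q + 1 = x + n" and c: "\<not> E B (h x)"
    and Tb: "p = Suc pm" "\<And>k. x \<le> k \<Longrightarrow> k \<le> p \<Longrightarrow> E B (h k) \<longleftrightarrow> (k = pm \<or> k = p)"
  shows False
proof -
  have Bpm: "E B (h pm)" using Tb ord by auto
  have pmx: "x < pm" using Bpm c Tb ord by (cases "pm = x") auto
  show False
  proof (rule edge_and_vertex_neighbours_impossible[OF BV BH, of pm q])
    show "pm + 3 \<le> q" "q + 2 \<le> pm + n" using ord cyc Tb pmx by auto
    show "E B (h (Suc pm))" "E B (h q)" using Bp Bq Tb by auto
    show "E B (h (pm + n))" using Bpm h_add_length by simp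
  next
    fix k assume k: "Suc pm \<le> k" "k \<le> pm + n" "E B (h k)"
    show "k = Suc pm \<or> k = q \<or> k = pm + n"
    proof (cases "k \<le> q")
      case True
      then show ?thesis using k Biff(1)[of k] Tb by (cases "k = q") auto
    next
      case False
      then have "n \<le> k" "x \<le> k - n" "k - n \<le> p" using k cyc Tb by auto
      then have "k - n = pm \<or> k - n = p" using k h_diff_length[of k] Tb(2)[of "k - n"] by auto
      then show ?thesis using k Tb \<open>n \<le> k\<close> by auto
    qed
  qed
qed

lemma wrapped_A_alone:
  assumes cyc: "q + 1 = x + n"
    and Ua: "\<And>k. y \<le> k \<Longrightarrow> k \<le> q \<Longrightarrow> E A (h k) \<longleftrightarrow> k = y"
  shows False
proof (rule two_neighbours_impossible[OF AV AH, of x y])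
  show "x + 2 \<le> y" "y + 2 \<le> x + n" using ord cyc by auto
  show "E A (h x)" "E A (h y)" by (rule Ax, rule Ay)
next
  fix k assume k: "x \<le> k" "k < x + n" "E A (h k)"
  show "k = x \<or> k = y"
  proof (cases "k \<le> y")
    case True
    then show ?thesis using k Aiff(1)[of k] by (cases "k = y") auto
  next
    case False
    then show ?thesis using k Ua[of k] cyc by auto
  qed
qed

lemma wrapped_A_twin:
  assumes cyc: "q + 1 = x + n" and c: "\<not> E A (h q)"
    and Ub: "Suc y \<le> q" "\<And>k. y \<le> k \<Longrightarrow> k \<le> q \<Longrightarrow> E A (h k) \<longleftrightarrow> (k = y \<or> k = Suc y)"
  shows False
proof -
  have A1: "E A (h (Suc y))" using Ub by auto
  have yq: "Suc y \<noteq> q" using A1 c by auto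
  show False
  proof (rule edge_and_vertex_neighbours_impossible[OF AV AH, of y "x + n"])
    show "y + 3 \<le> x + n" "x + n + 2 \<le> y + n" using ord cyc Ub yq by auto
    show "E A (h (Suc y))" by (rule A1)
    show "E A (h (x + n))" "E A (h (y + n))" using Ax Ay h_add_length by simp_all
  next
    fix k assume k: "Suc y \<le> k" "k \<le> y + n" "E A (h k)"
    show "k = Suc y \<or> k = x + n \<or> k = y + n"
    proof (cases "k \<le> q")
      case True
      then show ?thesis using k Ub(2)[of k] by auto
    next
      case False
      then have "n \<le> k" "x \<le> k - n" "k - n \<le> y" using k cyc by auto
      then have "k - n = x \<or> k - n = y"
        using k h_diff_length[of k] Aiff(1)[of "k - n"] by (cases "k - n = y") auto
      then show ?thesis using \<open>n \<le> k\<close> by auto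
    qed
  qed
qed

lemma wrapped_neither:
  assumes cyc: "q + 1 = x + n" and c0: "\<not> E B (h x)" "\<not> E A (h q)"
  shows False
proof (cases rule: B_before_p_cases)
  case a then show ?thesis using wrapped_B_alone[OF cyc] by blast
next
  case (b pm) then show ?thesis using wrapped_B_twin[OF cyc c0(1)] by blast
next
  case (g r1)
  show ?thesis
  proof (cases rule: A_after_y_cases)
    case a then show ?thesis using wrapped_A_alone[OF cyc] by blast
  next
    case b then show ?thesis using wrapped_A_twin[OF cyc c0(2)] by blast
  next
    case (g s) then show ?thesis using wrapped_far_far[OF cyc c0] \<open>x \<le> r1\<close> \<open>r1 + 2 \<le> p\<close>
        \<open>\<And>k. x \<le> k \<Longrightarrow> k \<le> r1 \<Longrightarrow> E B (h k) = (k = r1)\<close> by blast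
  qed
qed

lemma wrapped_Bx_near:
  assumes cyc: "q + 1 = x + n" and c1: "E B (h x)" "\<not> E A (h q)" and px: "p = Suc x"
  shows False
proof (cases rule: A_after_y_cases)
  case a then show ?thesis using wrapped_A_alone[OF cyc] by blast
next
  case b then show ?thesis using wrapped_A_twin[OF cyc c1(2)] by blast
next
  case (g s)
  have sq: "s < q" using g c1 by (cases "s = q") auto
  show ?thesis
  proof (cases "\<exists>t. y < t \<and> t < s \<and> E A (h t)")
    case True
    then obtain t where "y < t" "t < s" "E A (h t)" by blast
    moreover have "E A (h s)" using g by auto
    ultimately show ?thesis using wrapped_Bx_turtle[OF cyc c1 px, of t s] sq by auto
  next
    case False
    have "E A (h k) \<longleftrightarrow> (k = y \<or> k = s)" if "y \<le> k" "k \<le> q" for k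
    proof (cases "s \<le> k")
      case True then show ?thesis using g that by auto
    next
      case False': False
      then show ?thesis using False that Ay g by (cases "k = y") auto
    qed
    then show ?thesis using wrapped_Bx_theta[OF cyc c1 px] g sq by blast
  qed
qed

lemma wrapped_Bx_far:
  assumes cyc: "q + 1 = x + n" and c1: "E B (h x)" "\<not> E A (h q)" and px: "p \<noteq> Suc x"
  shows False
proof -
  obtain s where s: "y \<le> s" "s < q" "E A (h s)" and sg: "\<And>k. s < k \<Longrightarrow> k < q \<Longrightarrow> \<not> E A (h k)"
    using obtain_greatest_below[of y q "\<lambda>k. E A (h k)"] Ay ord by blast
  have L: "interleaved V E H B A p s q (x + n)"
  proof (rule interleaved.intro[OF pair_swap interleaved_axioms.intro])
    show "p < s" "s < q" "q < x + n" "x + n < p + n" using s ord by auto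
    show "E A (h (x + n))" using Ax h_add_length by simp
    show "\<not> E A (h k)" if "s < k" "k < x + n" for k
    proof (cases "k < q")
      case False
      then have "k = q" using that cyc by simp
      then show ?thesis using c1(2) by simp
    qed (use sg that in auto)
  qed (use Bp Bq Bin s in auto)
  have nc: "x + n + 2 \<le> p + n" using px ord by auto
  have "E B (h (x + n))" using c1 h_add_length by simp
  then show False using interleaved.open_case[OF L nc] ord by auto
qed

lemma wrapped_Aq_near:
  assumes cyc: "q + 1 = x + n" and c2: "E A (h q)" "\<not> E B (h x)" and yq: "y + 1 = q"
  shows False
proof (cases rule: B_before_p_cases)
  case a then show ?thesis using wrapped_B_alone[OF cyc] by blast
next
  case (b pm) then show ?thesis using wrapped_B_twin[OF cyc c2(2)] by blast
next
  case (g r1)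
  have xr: "x < r1" using g c2 by (cases "r1 = x") auto
  show ?thesis
  proof (cases "\<exists>t. r1 < t \<and> t < p \<and> E B (h t)")
    case True
    then obtain t where "r1 < t" "t < p" "E B (h t)" by blast
    moreover have "E B (h r1)" using g by auto
    ultimately show ?thesis using wrapped_Aq_turtle[OF cyc c2 yq xr, of t] by auto
  next
    case False
    have "E B (h k) \<longleftrightarrow> (k = r1 \<or> k = p)" if "x \<le> k" "k \<le> p" for k
    proof (cases "k \<le> r1")
      case True then show ?thesis using g that by auto
    next
      case False': False
      then show ?thesis using False that Bp g by (cases "k = p") auto
    qed
    then show ?thesis using wrapped_Aq_theta[OF cyc c2 yq xr] g by blast
  qed
qed

lemma wrapped_Aq_far:
  assumes cyc: "q + 1 = x + n" and c2: "E A (h q)" "\<not> E B (h x)" and yq: "y + 1 \<noteq> q"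
  shows False
proof -
  obtain r where r: "x < r" "r \<le> p" "E B (h r)" and rl: "\<And>k. x < k \<Longrightarrow> k < r \<Longrightarrow> \<not> E B (h k)"
    using obtain_least_above[of x p "\<lambda>k. E B (h k)"] Bp ord by blast
  have L: "interleaved V E H B A q (x + n) (r + n) (y + n)"
  proof (rule interleaved.intro[OF pair_swap interleaved_axioms.intro])
    show "q < x + n" "x + n < r + n" "r + n < y + n" "y + n < q + n" using r ord by auto
    show "E B (h (r + n))" "E A (h (x + n))" "E A (h (y + n))" using r Ax Ay h_add_length by simp_all
    show "\<not> E B (h k)" if "q < k" "k < r + n" for k
    proof -
      have "n \<le> k" "x \<le> k - n" "k - n < r" using that cyc by auto
      then show ?thesis using h_diff_length[of k] rl[of "k - n"] c2 by (cases "k - n = x") auto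
    qed
    show "\<not> E A (h k)" if "x + n < k" "k < y + n" for k
      using that h_diff_length[of k] Ain[of "k - n"] by auto
  qed (use Bq in auto)
  have nc: "y + n + 2 \<le> q + n" using yq ord by auto
  show False using interleaved.open_case[OF L nc] c2 ord by auto
qed

lemma wrapped_case:
  assumes cyc: "q + 1 = x + n"
  shows False
proof -
  have "h (Suc q) = h x" using cyc h_add_length[of x] by simp
  then have "\<not> (E B (h x) \<and> E A (h q))" using no_common_edge[of q] Ax Bq by auto
  then consider "\<not> E B (h x)" "\<not> E A (h q)" | "E B (h x)" "\<not> E A (h q)" | "E A (h q)" "\<not> E B (h x)"
    by blast
  then show False
    using wrapped_neither[OF cyc] wrapped_Bx_near[OF cyc] wrapped_Bx_far[OF cyc]
      wrapped_Aq_near[OF cyc] wrapped_Aq_far[OF cyc]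
    by cases blast+
qed

lemma window_theta_far:
  assumes nc: "q + 2 \<le> x + n" and px: "p = Suc x" and yp: "y = Suc p" and qy: "q = Suc y"
    and Bx: "\<not> E B (h x)"
    and sr: "q < s" "s + 2 \<le> r" "r < x + n"
    and As: "\<And>k. q \<le> k \<Longrightarrow> k \<le> s \<Longrightarrow> E A (h k) \<longleftrightarrow> k = s"
    and Ar: "\<And>k. r \<le> k \<Longrightarrow> k < x + n \<Longrightarrow> \<not> E A (h k)"
    and Bs: "\<And>k. q \<le> k \<Longrightarrow> k \<le> s \<Longrightarrow> E B (h k) \<longleftrightarrow> k = q"
    and Br: "\<And>k. r \<le> k \<Longrightarrow> k < x + n \<Longrightarrow> E B (h k) \<longleftrightarrow> k = r"
  shows False
proof -
  obtain xn where xn: "x + n = Suc xn" using nc by (cases "x + n") auto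
  have As': "\<And>k. q \<le> k \<Longrightarrow> k \<le> s \<Longrightarrow> E (h k) A \<longleftrightarrow> k = s" using As E_sym by blast
  have Ar': "\<And>k. r \<le> k \<Longrightarrow> k < x + n \<Longrightarrow> \<not> E (h k) A" using Ar E_sym by blast
  have Bs': "\<And>k. q \<le> k \<Longrightarrow> k \<le> s \<Longrightarrow> E (h k) B \<longleftrightarrow> k = q" using Bs E_sym by blast
  have Br': "\<And>k. r \<le> k \<Longrightarrow> k < x + n \<Longrightarrow> E (h k) B \<longleftrightarrow> k = r" using Br E_sym by blast
  have Bx': "\<not> E (h x) B" using Bx E_sym by blast
  note F = index_facts As As' Ar Ar' Bs Bs' Br Br' Bx Bx'
  let ?I1 = "[h p]" and ?I2 = "rev (seg r xn)" and ?I3 = "A # rev (seg q s)"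
  have I1: "interior_path V E (h x) B ?I1"
    unfolding interior_path_def using is_path_singleton[OF h_in_V G] ord px nc length_ge_7 by (auto simp: F)
  have I2: "interior_path V E (h x) B ?I2"
    unfolding interior_path_def using rev_seg_path[of r xn] ord px sr xn nc length_ge_7 by (auto simp: F)
  have pI3: "is_path V E ?I3"
    by (rule is_path_Cons[OF G rev_seg_path]) (use ord sr nc length_ge_7 in \<open>auto simp: F\<close>)
  have I3: "interior_path V E (h x) B ?I3"
    unfolding interior_path_def using pI3 ord px yp qy sr nc length_ge_7 by (auto simp: F)
  have s12: "anticomplete E ?I1 ?I2" unfolding anticomplete_def using ord px sr xn nc length_ge_7 by (auto simp: F)
  have s13: "anticomplete E ?I1 ?I3" unfolding anticomplete_def using ord px yp qy sr nc length_ge_7 by (auto simp: F)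
  have s23: "anticomplete E ?I2 ?I3" unfolding anticomplete_def using ord px yp qy sr xn nc length_ge_7 by (auto simp: F)
  have ab: "h x \<noteq> B" "\<not> E (h x) B" using Bx' by (auto simp: F)
  show False using has_thetaI[OF G h_in_V BV ab I1 I2 I3 s12 s13 s23] no_theta by blast
qed

lemma window_theta_near:
  assumes nc: "q + 2 \<le> x + n" and px: "p = Suc x" and yp: "y = Suc p" and qy: "q = Suc y"
    and Bx: "\<not> E B (h x)"
    and sr: "q < s" "r = Suc s" "r + 2 \<le> x + n"
    and As: "\<And>k. q \<le> k \<Longrightarrow> k \<le> s \<Longrightarrow> E A (h k) \<longleftrightarrow> k = s"
    and Ar: "\<And>k. r \<le> k \<Longrightarrow> k < x + n \<Longrightarrow> \<not> E A (h k)"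
    and Bs: "\<And>k. q \<le> k \<Longrightarrow> k \<le> s \<Longrightarrow> E B (h k) \<longleftrightarrow> k = q"
    and Br: "\<And>k. r \<le> k \<Longrightarrow> k < x + n \<Longrightarrow> E B (h k) \<longleftrightarrow> k = r"
  shows False
proof -
  obtain xn where xn: "x + n = Suc xn" using nc by (cases "x + n") auto
  have As': "\<And>k. q \<le> k \<Longrightarrow> k \<le> s \<Longrightarrow> E (h k) A \<longleftrightarrow> k = s" using As E_sym by blast
  have Ar': "\<And>k. r \<le> k \<Longrightarrow> k < x + n \<Longrightarrow> \<not> E (h k) A" using Ar E_sym by blast
  have Bs': "\<And>k. q \<le> k \<Longrightarrow> k \<le> s \<Longrightarrow> E (h k) B \<longleftrightarrow> k = q" using Bs E_sym by blast
  have Br': "\<And>k. r \<le> k \<Longrightarrow> k < x + n \<Longrightarrow> E (h k) B \<longleftrightarrow> k = r" using Br E_sym by blast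
  have Bx': "\<not> E (h x) B" using Bx E_sym by blast
  note F = index_facts As As' Ar Ar' Bs Bs' Br Br' Bx Bx'
  let ?I1 = "seg (Suc r) xn" and ?I2 = "[B, h p]" and ?I3 = "[h s, A]"
  have I1: "interior_path V E (h r) (h x) ?I1"
    unfolding interior_path_def using seg_path[of "Suc r" xn] ord px sr xn nc length_ge_7 by (auto simp: F)
  have pI2: "is_path V E ?I2"
    by (rule is_path_Cons[OF G is_path_singleton[OF h_in_V G]]) (use ord in \<open>auto simp: F\<close>)
  have I2: "interior_path V E (h r) (h x) ?I2"
    unfolding interior_path_def using pI2 ord px sr xn nc length_ge_7 by (auto simp: F)
  have pI3: "is_path V E ?I3"
    by (rule is_path_Cons[OF G is_path_singleton[OF AV G]]) (use ord sr in \<open>auto simp: F\<close>)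
  have I3: "interior_path V E (h r) (h x) ?I3"
    unfolding interior_path_def using pI3 ord px sr xn nc length_ge_7 by (auto simp: F)
  have s12: "anticomplete E ?I1 ?I2" unfolding anticomplete_def using ord px sr xn nc length_ge_7 by (auto simp: F)
  have s13: "anticomplete E ?I1 ?I3" unfolding anticomplete_def using ord px sr xn nc length_ge_7 by (auto simp: F)
  have s23: "anticomplete E ?I2 ?I3" unfolding anticomplete_def using ord px yp qy sr xn nc length_ge_7 by (auto simp: F)
  have ab: "h r \<noteq> h x" "\<not> E (h r) (h x)" using ord sr nc length_ge_7 by (auto simp: F)
  show False using has_thetaI[OF G h_in_V h_in_V ab I1 I2 I3 s12 s13 s23] no_theta by blast
qed

lemma window_theta_end:
  assumes nc: "q + 2 \<le> x + n" and px: "p = Suc x" and yp: "y = Suc p" and qy: "q = Suc y"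
    and Bx: "\<not> E B (h x)"
    and sr: "q < s" "r = Suc s" "r + 1 = x + n"
    and As: "\<And>k. q \<le> k \<Longrightarrow> k \<le> s \<Longrightarrow> E A (h k) \<longleftrightarrow> k = s"
    and Ar: "\<And>k. r \<le> k \<Longrightarrow> k < x + n \<Longrightarrow> \<not> E A (h k)"
    and Bs: "\<And>k. q \<le> k \<Longrightarrow> k \<le> s \<Longrightarrow> E B (h k) \<longleftrightarrow> k = q"
    and Br: "\<And>k. r \<le> k \<Longrightarrow> k < x + n \<Longrightarrow> E B (h k) \<longleftrightarrow> k = r"
  shows False
proof -
  obtain sm where sm: "s = Suc sm" using sr by (cases s) auto
  have As': "\<And>k. q \<le> k \<Longrightarrow> k \<le> s \<Longrightarrow> E (h k) A \<longleftrightarrow> k = s" using As E_sym by blast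
  have Ar': "\<And>k. r \<le> k \<Longrightarrow> k < x + n \<Longrightarrow> \<not> E (h k) A" using Ar E_sym by blast
  have Bs': "\<And>k. q \<le> k \<Longrightarrow> k \<le> s \<Longrightarrow> E (h k) B \<longleftrightarrow> k = q" using Bs E_sym by blast
  have Br': "\<And>k. r \<le> k \<Longrightarrow> k < x + n \<Longrightarrow> E (h k) B \<longleftrightarrow> k = r" using Br E_sym by blast
  have Bx': "\<not> E (h x) B" using Bx E_sym by blast
  note F = index_facts As As' Ar Ar' Bs Bs' Br Br' Bx Bx'
  let ?I1 = "rev (seg (Suc q) sm)" and ?I2 = "[A, h y]" and ?I3 = "[h r, B]"
  have I1: "interior_path V E (h s) (h q) ?I1"
    unfolding interior_path_def using rev_seg_path[of "Suc q" sm] ord px yp qy sr sm nc length_ge_7 by (auto simp: F)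
  have pI2: "is_path V E ?I2"
    by (rule is_path_Cons[OF G is_path_singleton[OF h_in_V G]]) (use ord in \<open>auto simp: F\<close>)
  have I2: "interior_path V E (h s) (h q) ?I2"
    unfolding interior_path_def using pI2 ord px yp qy sr nc length_ge_7 by (auto simp: F)
  have pI3: "is_path V E ?I3"
    by (rule is_path_Cons[OF G is_path_singleton[OF BV G]]) (use ord sr in \<open>auto simp: F\<close>)
  have I3: "interior_path V E (h s) (h q) ?I3"
    unfolding interior_path_def using pI3 ord px yp qy sr nc length_ge_7 by (auto simp: F)
  have s12: "anticomplete E ?I1 ?I2" unfolding anticomplete_def using ord px yp qy sr sm nc length_ge_7 by (auto simp: F)
  have s13: "anticomplete E ?I1 ?I3" unfolding anticomplete_def using ord px yp qy sr sm nc length_ge_7 by (auto simp: F)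
  have s23: "anticomplete E ?I2 ?I3" unfolding anticomplete_def using ord px yp qy sr nc length_ge_7 by (auto simp: F)
  have ab: "h s \<noteq> h q" "\<not> E (h s) (h q)" using ord px yp qy sr nc length_ge_7 by (auto simp: F)
  show False using has_thetaI[OF G h_in_V h_in_V ab I1 I2 I3 s12 s13 s23] no_theta by blast
qed

lemma window_impossible:
  assumes nc: "q + 2 \<le> x + n" and px: "p = Suc x" and yp: "y = Suc p" and qy: "q = Suc y"
    and Bx: "\<not> E B (h x)" and sr: "q < s" "s < r" "r < x + n"
    and As: "\<And>k. q \<le> k \<Longrightarrow> k \<le> s \<Longrightarrow> E A (h k) \<longleftrightarrow> k = s"
    and Ar: "\<And>k. r \<le> k \<Longrightarrow> k < x + n \<Longrightarrow> \<not> E A (h k)"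
    and Bs: "\<And>k. q \<le> k \<Longrightarrow> k \<le> s \<Longrightarrow> E B (h k) \<longleftrightarrow> k = q"
    and Br: "\<And>k. r \<le> k \<Longrightarrow> k < x + n \<Longrightarrow> E B (h k) \<longleftrightarrow> k = r"
  shows False
proof (cases "s + 2 \<le> r")
  case True
  then show False using window_theta_far[OF nc px yp qy Bx sr(1) True sr(3)] As Ar Bs Br by blast
next
  case False
  then have rs: "r = Suc s" using sr by auto
  show False
  proof (cases "r + 2 \<le> x + n")
    case True
    then show False using window_theta_near[OF nc px yp qy Bx sr(1) rs True] As Ar Bs Br by blast
  next
    case False
    then have "r + 1 = x + n" using sr by auto
    then show False using window_theta_end[OF nc px yp qy Bx sr(1) rs] As Ar Bs Br by blast
  qed
qed

lemma A_beyond_q: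
  assumes nc: "q + 2 \<le> x + n" and Ayq: "\<And>k. y < k \<Longrightarrow> k \<le> q \<Longrightarrow> \<not> E A (h k)"
  shows "\<exists>s. q < s \<and> s < x + n \<and> E A (h s)"
proof (rule ccontr)
  assume none: "\<nexists>s. q < s \<and> s < x + n \<and> E A (h s)"
  show False
  proof (rule two_neighbours_impossible[OF AV AH, of x y])
    show "x + 2 \<le> y" "y + 2 \<le> x + n" using ord nc by auto
    show "E A (h x)" "E A (h y)" by (rule Ax, rule Ay)
  next
    fix k assume k: "x \<le> k" "k < x + n" "E A (h k)"
    show "k = x \<or> k = y"
    proof (cases "k \<le> y")
      case True then show ?thesis using k Aiff(1)[of k] by (cases "k = y") auto
    next
      case False then show ?thesis using k Ayq[of k] none by (cases "k \<le> q") auto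
    qed
  qed
qed

lemma B_beyond_q:
  assumes nc: "q + 2 \<le> x + n" and Bxp: "\<And>k. x \<le> k \<Longrightarrow> k < p \<Longrightarrow> \<not> E B (h k)"
  shows "\<exists>r. q < r \<and> r < x + n \<and> E B (h r)"
proof (rule ccontr)
  assume none: "\<nexists>r. q < r \<and> r < x + n \<and> E B (h r)"
  show False
  proof (rule two_neighbours_impossible[OF BV BH, of p q])
    show "p + 2 \<le> q" "q + 2 \<le> p + n" using ord nc by auto
    show "E B (h p)" "E B (h q)" by (rule Bp, rule Bq)
  next
    fix k assume k: "p \<le> k" "k < p + n" "E B (h k)"
    show "k = p \<or> k = q"
    proof (cases "k \<le> q")
      case True then show ?thesis using k Biff(1)[of k] by (cases "k = q") auto
    next
      case False
      show ?thesis
      proof (cases "k < x + n")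
        case True then show ?thesis using False k none by auto
      next
        case False
        then have "n \<le> k" "x \<le> k - n" "k - n < p" using k by auto
        then show ?thesis using h_diff_length[of k] Bxp[of "k - n"] k by auto
      qed
    qed
  qed
qed

lemma adjacent_middle_overlap:
  assumes nc: "q + 2 \<le> x + n" and yp: "y = Suc p"
    and s: "q < s" "s < x + n" "E A (h s)" and As: "\<And>k. y < k \<Longrightarrow> k < s \<Longrightarrow> \<not> E A (h k)"
    and r: "q < r" "r < x + n" "E B (h r)" and Br: "\<And>k. r < k \<Longrightarrow> k < p + n \<Longrightarrow> \<not> E B (h k)"
    and sr: "s \<le> r"
  shows False
proof -
  have L1: "interleaved V E H B A p y q s"
  proof (rule interleaved.intro[OF pair_swap interleaved_axioms.intro])
    show "p < y" "y < q" "q < s" "s < p + n" using ord s by auto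
  qed (use Bp Bq Bin Ay s As in auto)
  have L2: "interleaved V E H B A r (x + n) (p + n) (y + n)"
  proof (rule interleaved.intro[OF pair_swap interleaved_axioms.intro])
    show "r < x + n" "x + n < p + n" "p + n < y + n" "y + n < r + n" using ord r by auto
    show "E B (h (p + n))" "E A (h (x + n))" "E A (h (y + n))"
      using Bp Ax Ay h_add_length by simp_all
    show "\<not> E A (h k)" if "x + n < k" "k < y + n" for k
      using that h_diff_length[of k] Ain[of "k - n"] by auto
  qed (use r Br in auto)
  have "s + 2 \<le> p + n" using s ord by auto
  then have bad1: "q = Suc y" "\<And>k. q < k \<Longrightarrow> k \<le> s \<Longrightarrow> \<not> E B (h k)"
    using interleaved.open_case[OF L1] by blast+
  have "y + n + 2 \<le> r + n" using ord r by auto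
  then have bad2: "p = Suc x" "\<And>k. r \<le> k \<Longrightarrow> k < x + n \<Longrightarrow> \<not> E A (h k)"
    using interleaved.open_case[OF L2] by auto
  have "\<not> E B (h (x + n))" using Br r ord by simp
  then have Bx: "\<not> E B (h x)" using h_add_length by simp
  have "s \<noteq> r" using bad1(2)[of s] s r by auto
  then have "s < r" using sr by simp
  show False
  proof (rule window_impossible[OF nc bad2(1) yp bad1(1) Bx s(1) \<open>s < r\<close> r(2) _ bad2(2)])
    show "E A (h k) \<longleftrightarrow> k = s" if "q \<le> k" "k \<le> s" for k
      using that As[of k] s ord by (cases "k = s") auto
    show "E B (h k) \<longleftrightarrow> k = q" if "q \<le> k" "k \<le> s" for k
      using that bad1(2)[of k] Bq by (cases "k = q") auto
    show "E B (h k) \<longleftrightarrow> k = r" if "r \<le> k" "k < x + n" for k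
      using that Br[of k] r ord by (cases "k = r") auto
  qed
qed

lemma adjacent_middle_case:
  assumes nc: "q + 2 \<le> x + n" and yp: "y = Suc p"
    and Bxp: "\<And>k. x \<le> k \<Longrightarrow> k < p \<Longrightarrow> \<not> E B (h k)"
    and Ayq: "\<And>k. y < k \<Longrightarrow> k \<le> q \<Longrightarrow> \<not> E A (h k)"
  shows False
proof -
  obtain s0 where "q < s0" "s0 < x + n" "E A (h s0)" using A_beyond_q[OF nc Ayq] by blast
  then obtain s where s: "q < s" "s < x + n" "E A (h s)" and sl: "\<And>k. q < k \<Longrightarrow> k < s \<Longrightarrow> \<not> E A (h k)"
    using obtain_least_above[of q s0 "\<lambda>k. E A (h k)"] by (metis le_less_trans)
  obtain r0 where "q < r0" "r0 < x + n" "E B (h r0)" using B_beyond_q[OF nc Bxp] by blast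
  then obtain r where r: "q < r" "r < x + n" "E B (h r)" and rg: "\<And>k. r < k \<Longrightarrow> k < x + n \<Longrightarrow> \<not> E B (h k)"
    using obtain_greatest_below[of r0 "x + n" "\<lambda>k. E B (h k)"] by (metis less_le_trans)
  have As: "\<not> E A (h k)" if "y < k" "k < s" for k
    using Ayq[of k] sl[of k] that by (cases "k \<le> q") auto
  have Br: "\<not> E B (h k)" if "r < k" "k < p + n" for k
  proof (cases "k < x + n")
    case False
    then have "n \<le> k" "x \<le> k - n" "k - n < p" using that by auto
    then show ?thesis using h_diff_length[of k] Bxp[of "k - n"] by auto
  qed (use rg that in auto)
  show False
  proof (cases "r < s")
    case True
    have "interleaved V E H A B y r s (p + n)"
    proof (rule interleaved.intro[OF pair_self interleaved_axioms.intro])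
      show "y < r" "r < s" "s < p + n" "p + n < y + n" using True ord r s by auto
      show "E B (h (p + n))" using Bp h_add_length by simp
    qed (use Ay s As r Br in auto)
    then show False by (rule interleaved.wrapped_case) (use yp in auto)
  next
    case False
    then show False using adjacent_middle_overlap[OF nc yp s As r Br] by simp
  qed
qed

lemma interleaved_impossible: False
proof (cases "q + 1 = x + n")
  case True
  then show False by (rule wrapped_case)
next
  case False
  then have nc: "q + 2 \<le> x + n" using ord by auto
  show False
  proof (cases "y = Suc p \<and> (\<forall>k. x \<le> k \<longrightarrow> k < p \<longrightarrow> \<not> E B (h k)) \<and> (\<forall>k. y < k \<longrightarrow> k \<le> q \<longrightarrow> \<not> E A (h k))")
    case True
    then show False using adjacent_middle_case[OF nc] by blast
  qed (use open_case[OF nc] in blast)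
qed

end

section \<open>Crossing vertices have a common edge\<close>

context nonadj_pair begin

lemma common_neighbours_at_impossible:
  assumes "a \<le> i" "i < j" "j < k" "k < a + n"
    and "E A (h i)" "E A (h j)" "E A (h k)" "E B (h i)" "E B (h j)" "E B (h k)"
  shows False
proof -
  have "h i \<noteq> h j" "h i \<noteq> h k" "h j \<noteq> h k"
    using h_eq_iff[of a i j] h_eq_iff[of a i k] h_eq_iff[of a j k] assms(1-4) by auto
  then show False using three_common_neighbours_impossible[of "h i" "h j" "h k"] h_in_set assms(5-10)
    by blast
qed

lemma sector_impossible:
  assumes o: "x < b" "b < y" "y < w" "w < x + n"
    and Ax: "E A (h x)" "E A (h y)" and Ain: "\<And>k. x < k \<Longrightarrow> k < y \<Longrightarrow> \<not> E A (h k)"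
    and Bb: "E B (h b)" "E B (h w)" and nb: "\<not> (E B (h x) \<and> E B (h y))"
  shows False
proof (cases "E B (h y)")
  case False
  obtain p where p: "b \<le> p" "p < y" "E B (h p)" and pg: "\<And>k. p < k \<Longrightarrow> k < y \<Longrightarrow> \<not> E B (h k)"
    using obtain_greatest_below[of b y "\<lambda>k. E B (h k)"] o Bb by blast
  have "p < w" using p o by simp
  then obtain q where q: "p < q" "q \<le> w" "E B (h q)" and ql: "\<And>k. p < k \<Longrightarrow> k < q \<Longrightarrow> \<not> E B (h k)"
    using obtain_least_above[of p w "\<lambda>k. E B (h k)"] Bb by blast
  have "y < q" using pg[of q] q False by (cases q y rule: linorder_cases) auto
  then have "interleaved V E H A B x p y q"
    by (intro interleaved.intro[OF pair_self interleaved_axioms.intro]) (use o Ax Ain p q ql in auto)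
  then show False by (rule interleaved.interleaved_impossible)
next
  case True
  then have Bx: "\<not> E B (h x)" using nb by blast
  obtain p where p: "x < p" "p \<le> b" "E B (h p)" and pl: "\<And>k. x < k \<Longrightarrow> k < p \<Longrightarrow> \<not> E B (h k)"
    using obtain_least_above[of x b "\<lambda>k. E B (h k)"] o Bb by blast
  obtain q where q: "w \<le> q" "q < x + n" "E B (h q)" and qg: "\<And>k. q < k \<Longrightarrow> k < x + n \<Longrightarrow> \<not> E B (h k)"
    using obtain_greatest_below[of w "x + n" "\<lambda>k. E B (h k)"] o Bb by blast
  have "interleaved V E H B A q (x + n) (p + n) (y + n)"
  proof (rule interleaved.intro[OF pair_swap interleaved_axioms.intro])
    show "q < x + n" "x + n < p + n" "p + n < y + n" "y + n < q + n" using p q o by auto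
    show "E B (h (p + n))" "E A (h (x + n))" "E A (h (y + n))" using p Ax h_add_length by simp_all
    show "\<not> E B (h k)" if "q < k" "k < p + n" for k
    proof (cases "k < x + n")
      case False
      then have "n \<le> k" "x \<le> k - n" "k - n < p" using that by auto
      then show ?thesis using h_diff_length[of k] pl[of "k - n"] Bx by (cases "k - n = x") auto
    qed (use qg that in auto)
    show "\<not> E A (h k)" if "x + n < k" "k < y + n" for k
      using that h_diff_length[of k] Ain[of "k - n"] by auto
  qed (use q in auto)
  then show False by (rule interleaved.interleaved_impossible)
qed

lemma B_at_sector_ends_impossible:
  assumes o: "x < b" "b < y" "y < w" "w < x + n"
    and Ax: "E A (h x)" "E A (h y)" and Ain: "\<And>k. x < k \<Longrightarrow> k < y \<Longrightarrow> \<not> E A (h k)"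
    and Bb: "E B (h b)" "E B (h w)" and Bxy: "E B (h x)" "E B (h y)"
  shows False
proof (cases "E A (h w)")
  case True
  then show False using common_neighbours_at_impossible[of x x y w] o Ax Bxy Bb by auto
next
  case False
  obtain x2 y2 where s2: "y \<le> x2" "x2 < w" "w < y2" "y2 \<le> x2 + n" "E A (h x2)" "E A (h y2)"
    and A2: "\<And>k. x2 < k \<Longrightarrow> k < y2 \<Longrightarrow> \<not> E A (h k)"
    by (rule obtain_sector[of A w y]) (use False Ax o in auto)
  have "y2 \<le> x + n" using A2[of "x + n"] Ax h_add_length s2 o by (cases "y2 \<le> x + n") auto
  consider (two) "x2 = y" "y2 = x + n" | (common) "E B (h x2)" "E B (h y2)" "x2 \<noteq> y \<or> y2 \<noteq> x + n"
    | (sector) "\<not> (E B (h x2) \<and> E B (h y2))" "x2 \<noteq> y \<or> y2 \<noteq> x + n" by blast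
  then show False
  proof cases
    case two
    show False
    proof (rule two_neighbours_impossible[OF AV AH, of x y])
      show "x + 2 \<le> y" "y + 2 \<le> x + n" using o by auto
      show "E A (h x)" "E A (h y)" by (rule Ax(1), rule Ax(2))
    next
      fix k assume k: "x \<le> k" "k < x + n" "E A (h k)"
      show "k = x \<or> k = y"
        using Ain[of k] A2[of k] two k by (cases k y rule: linorder_cases) (auto simp: order_le_less)
    qed
  next
    case common
    show False
    proof (cases "x2 = y")
      case True
      then show False using common_neighbours_at_impossible[of x x y y2] common s2 o Ax Bxy
        \<open>y2 \<le> x + n\<close> by auto
    next
      case False
      then show False using common_neighbours_at_impossible[of x x y x2] common s2 o Ax Bxy by auto
    qed
  next
    case sector
    show False
    proof (cases "y2 < x + n")
      case True
      have "x2 < w" "w < y2" "y2 < x + n" "x + n < x2 + n" using True s2 o by auto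
      moreover have "E B (h (x + n))" using Bxy h_add_length by simp
      ultimately show False using sector_impossible[OF _ _ _ _ s2(5,6) A2 Bb(2) _ sector(1)] by blast
    next
      case False
      then have "x2 \<noteq> y" using \<open>y2 \<le> x + n\<close> sector(2) by auto
      have "x2 < w" "w < y2" "y2 < y + n" "y + n < x2 + n"
        using \<open>x2 \<noteq> y\<close> \<open>y2 \<le> x + n\<close> s2 o by auto
      moreover have "E B (h (y + n))" using Bxy h_add_length by simp
      ultimately show False using sector_impossible[OF _ _ _ _ s2(5,6) A2 Bb(2) _ sector(1)] by blast
    qed
  qed
qed

lemma nested_if_B_inside_sector:
  assumes o: "x < y" "y < x + n" and Ain: "\<And>k. x < k \<Longrightarrow> k < y \<Longrightarrow> \<not> E A (h k)"
    and Bout: "\<And>k. y < k \<Longrightarrow> k < x + n \<Longrightarrow> \<not> E B (h k)"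
  shows "nested E H A B"
proof (rule nestedI[OF AH BH o])
  show "{z \<in> set H. E A z} \<subseteq> h ` {y..x + n}"
  proof
    fix z assume z: "z \<in> {z \<in> set H. E A z}"
    then obtain k where k: "x \<le> k" "k < x + n" "z = h k" using set_H_index_from[of z x] by auto
    show "z \<in> h ` {y..x + n}"
    proof (cases "k = x")
      case True then show ?thesis using k h_add_length[of x] o by (intro image_eqI[of _ _ "x + n"]) auto
    next
      case False
      then have "y \<le> k" using Ain[of k] z k by (cases "k < y") auto
      then show ?thesis using k by auto
    qed
  qed
  show "{z \<in> set H. E B z} \<subseteq> h ` {x..y}"
  proof
    fix z assume z: "z \<in> {z \<in> set H. E B z}"
    then obtain k where k: "x \<le> k" "k < x + n" "z = h k" using set_H_index_from[of z x] by auto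
    then have "k \<le> y" using Bout z by (cases "k \<le> y") auto
    then show "z \<in> h ` {x..y}" using k by auto
  qed
qed

lemma nested_if_B_neighbours_common:
  assumes common: "\<And>k. E B (h k) \<Longrightarrow> E A (h k)"
  shows "nested E H A B"
proof -
  define NB where "NB = {z \<in> set H. E B z}"
  have NA: "z \<in> set H" "E A z" "E B z" if "z \<in> NB" for z
    using that common set_H_index unfolding NB_def by auto
  consider "3 \<le> card NB" | "card NB = 2" | "card NB \<le> 1" by linarith
  then show ?thesis
  proof cases
    case 1
    then obtain a b c where abc: "a \<in> NB" "b \<in> NB" "c \<in> NB" "a \<noteq> b" "a \<noteq> c" "b \<noteq> c"
      using card_ge_3E[of NB] unfolding NB_def by auto
    then show ?thesis using three_common_neighbours_impossible[of a b c] NA[OF abc(1)] NA[OF abc(2)] NA[OF abc(3)]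
      by blast
  next
    case 2
    then obtain a b where ab: "NB = {a, b}" "a \<noteq> b" by (meson card_2_iff)
    then have "a \<in> NB" "b \<in> NB" by auto
    then have "\<not> E a b" using common_edge_impossible[of a b] NA by blast
    then show ?thesis using two_nonadjacent_neighbours_impossible[OF BV BH] ab unfolding NB_def by blast
  next
    case 3
    obtain i where "NB \<subseteq> {h i}"
    proof (cases "NB = {}")
      case False
      then obtain z where "z \<in> NB" by blast
      moreover obtain i where "z = h i" using \<open>z \<in> NB\<close> NA set_H_index by blast
      ultimately show thesis using that 3 card_le_Suc0_iff_eq[of NB] unfolding NB_def by auto
    qed (use that in auto)
    then show ?thesis
      using nested_if_single_neighbour[OF BH AH] nested_sym unfolding NB_def by blast
  qed
qed

lemma nested_if_no_common_edge: "nested E H A B"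
proof (rule ccontr)
  assume nn: "\<not> nested E H A B"
  obtain b0 where b0: "E B (h b0)" "\<not> E A (h b0)" using nn nested_if_B_neighbours_common by blast
  obtain z where "z \<in> set H" "E A z" using nn nested_if_single_neighbour[OF AH BH, of 0] by blast
  then obtain a0 where a0: "Suc b0 \<le> a0" "a0 < Suc b0 + n" "E A (h a0)"
    using set_H_index_from[of z "Suc b0"] by blast
  have "a0 \<noteq> b0 + n" using a0 b0 h_add_length by auto
  then have "\<not> E A (h (b0 + n))" "a0 < b0 + n" "b0 + n < a0 + n" using a0 b0 h_add_length by auto
  obtain x y where s: "a0 \<le> x" "x < b0 + n" "b0 + n < y" "y \<le> x + n" "E A (h x)" "E A (h y)"
    and Ain: "\<And>k. x < k \<Longrightarrow> k < y \<Longrightarrow> \<not> E A (h k)"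
    by (rule obtain_sector[of A "b0 + n" a0]) (use a0 \<open>\<not> E A (h (b0 + n))\<close> \<open>a0 < b0 + n\<close> \<open>b0 + n < a0 + n\<close> in auto)
  have "y \<noteq> x + n"
  proof
    assume "y = x + n"
    have "{z \<in> set H. E A z} \<subseteq> {h x}"
    proof
      fix z assume z: "z \<in> {z \<in> set H. E A z}"
      then obtain k where k: "x \<le> k" "k < x + n" "z = h k" using set_H_index_from[of z x] by auto
      then have "k = x" using Ain[of k] z \<open>y = x + n\<close> by (cases "k = x") auto
      then show "z \<in> {h x}" using k by simp
    qed
    then show False using nn nested_if_single_neighbour[OF AH BH] by blast
  qed
  then have "x < y" "y < x + n" using s by auto
  have "\<exists>w. y < w \<and> w < x + n \<and> E B (h w)"
    using nested_if_B_inside_sector[OF \<open>x < y\<close> \<open>y < x + n\<close> Ain] nn by blast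
  then obtain w where w: "y < w" "w < x + n" "E B (h w)" by blast
  have Bb0: "E B (h (b0 + n))" using b0 h_add_length by simp
  show False
  proof (cases "E B (h x) \<and> E B (h y)")
    case True
    then show False using B_at_sector_ends_impossible[OF s(2,3) w(1,2) s(5,6) Ain Bb0 w(3)] by blast
  next
    case False
    then show False using sector_impossible[OF s(2,3) w(1,2) s(5,6) Ain Bb0 w(3)] by blast
  qed
qed

end

theorem lemma2p8:
  fixes V :: "'a set" and E :: "'a \<Rightarrow> 'a \<Rightarrow> bool" and H :: "'a list" and u v :: 'a
  assumes "in_C V E"
    and "is_hole V E H" and "length H > 6"
    and "u \<in> V" and "v \<in> V" and "u \<notin> set H" and "v \<notin> set H"
    and "u \<noteq> v" and "\<not> E u v"
    and "cross E H u v"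
  shows "\<exists>x \<in> set H. \<exists>y \<in> set H. E x y \<and> E x u \<and> E y u \<and> E x v \<and> E y v"
proof (rule ccontr)
  assume no_edge: "\<not> (\<exists>x \<in> set H. \<exists>y \<in> set H. E x y \<and> E x u \<and> E y u \<and> E x v \<and> E y v)"
  interpret long_hole V E H using assms(1-3) unfolding in_C_def by unfold_locales auto
  have "nonadj_pair V E H u v"
  proof unfold_locales
    fix i
    have "E (h i) (h (Suc i))" using h_adj_iff[of i i "Suc i"] length_ge_7 H_ne_Nil by auto
    then show "\<not> (E u (h i) \<and> E u (h (Suc i)) \<and> E v (h i) \<and> E v (h (Suc i)))"
      using no_edge h_in_set E_sym by blast
  qed (use assms in \<open>auto simp: in_C_def\<close>)
  then have "nested E H u v" by (rule nonadj_pair.nested_if_no_common_edge)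
  then show False using assms(10) unfolding cross_def by blast
qed

end
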